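(* Let $n=3$ and $k\ge 2$. Let $A$ be a connectivity class of external positions which is not the frame class, and let $\pi$ be an even permutation of $A$. Then there exists a combination $g$ such that $g(p)=\pi(p)$ for all $p\in A$ and $g(q,l)=(q,l)$ for every external position $q\notin A$ and every $l\in B(q)$.
   Context: Here $n=3$, $k\ge2$, $M=\{0,\dots,k-1\}$. Positions are $p\in M^3$; $B(p)=\{i:p_i\in\{0,k-1\}\}$, $p$ external if $B(p)\ne\emptyset$ (internal positions are disregarded). For distinct $i,j$, $\psi_{i,j}:M^3\to M^3$ is $(\psi_{i,j}p)_i=k-1-p_j$, $(\psi_{i,j}p)_j=p_i$, the remaining coordinate unchanged; $\tau_{ij}$ is the transposition of $i,j$. A move is given by distinct $i,j$ and a constant $c\in M$ for the remaining coordinate: it applies $\psi_{i,j}$ to all positions whose remaining coordinate equals $c$ and fixes the others; it acts on $X=\{(p,l): p \text{ external}, l\in B(p)\}$ (orientation faces of cubies) by $(p,l)\mapsto(\psi_{i,j}(p),\tau_{ij}(l))$ for $p$ in its layer, fixing other pairs. A combination is a finite sequence of moves acting by composition. Connectivity classes are orbits of external positions under combinations. For odd $k$ the frame class is the set of positions with exactly one coordinate in $\{0,k-1\}$ and the others equal to $(k-1)/2$; for even $k$ there is none. *)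

theory Defs
  imports "HOL-Combinatorics.Combinatorics"
begin

text \<open>Positions in M^3 with M = {0..<k}: functions nat => nat, coordinates 0,1,2,
  all other values fixed to 0 (canonical representation).\<close>

definition Mpos :: "nat \<Rightarrow> (nat \<Rightarrow> nat) set" where
  "Mpos k = {p. \<forall>i. (i < 3 \<longrightarrow> p i < k) \<and> (3 \<le> i \<longrightarrow> p i = 0)}"

definition Bset :: "nat \<Rightarrow> (nat \<Rightarrow> nat) \<Rightarrow> nat set" where
  "Bset k p = {i. i < 3 \<and> (p i = 0 \<or> p i = k - 1)}"

definition external :: "nat \<Rightarrow> (nat \<Rightarrow> nat) \<Rightarrow> bool" where
  "external k p \<longleftrightarrow> p \<in> Mpos k \<and> Bset k p \<noteq> {}"

definition psi :: "nat \<Rightarrow> nat \<Rightarrow> nat \<Rightarrow> (nat \<Rightarrow> nat) \<Rightarrow> (nat \<Rightarrow> nat)" where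
  "psi k i j p = p(i := k - 1 - p j, j := p i)"

definition rem :: "nat \<Rightarrow> nat \<Rightarrow> nat" where
  "rem i j = 3 - i - j"

definition valid_move :: "nat \<Rightarrow> nat \<times> nat \<times> nat \<Rightarrow> bool" where
  "valid_move k m = (case m of (i, j, c) \<Rightarrow> i < 3 \<and> j < 3 \<and> i \<noteq> j \<and> c < k)"

definition move_pos :: "nat \<Rightarrow> nat \<times> nat \<times> nat \<Rightarrow> (nat \<Rightarrow> nat) \<Rightarrow> (nat \<Rightarrow> nat)" where
  "move_pos k m p = (case m of (i, j, c) \<Rightarrow> if p (rem i j) = c then psi k i j p else p)"

definition move_X :: "nat \<Rightarrow> nat \<times> nat \<times> nat \<Rightarrow> (nat \<Rightarrow> nat) \<times> nat \<Rightarrow> (nat \<Rightarrow> nat) \<times> nat" where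
  "move_X k m x = (case m of (i, j, c) \<Rightarrow> case x of (p, l) \<Rightarrow>
      if p (rem i j) = c then (psi k i j p, transpose i j l) else (p, l))"

definition combination :: "nat \<Rightarrow> (nat \<times> nat \<times> nat) list \<Rightarrow> bool" where
  "combination k ms \<longleftrightarrow> (\<forall>m \<in> set ms. valid_move k m)"

definition comb_pos :: "nat \<Rightarrow> (nat \<times> nat \<times> nat) list \<Rightarrow> (nat \<Rightarrow> nat) \<Rightarrow> (nat \<Rightarrow> nat)" where
  "comb_pos k ms = foldr (\<lambda>m f. move_pos k m \<circ> f) ms id"

definition comb_X :: "nat \<Rightarrow> (nat \<times> nat \<times> nat) list \<Rightarrow> (nat \<Rightarrow> nat) \<times> nat \<Rightarrow> (nat \<Rightarrow> nat) \<times> nat" where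
  "comb_X k ms = foldr (\<lambda>m f. move_X k m \<circ> f) ms id"

definition conn_class :: "nat \<Rightarrow> (nat \<Rightarrow> nat) \<Rightarrow> (nat \<Rightarrow> nat) set" where
  "conn_class k p = {comb_pos k ms p | ms. combination k ms}"

definition is_conn_class :: "nat \<Rightarrow> (nat \<Rightarrow> nat) set \<Rightarrow> bool" where
  "is_conn_class k A \<longleftrightarrow> (\<exists>p. external k p \<and> A = conn_class k p)"

text \<open>Frame class (meaningful for odd k).\<close>
definition frame_class :: "nat \<Rightarrow> (nat \<Rightarrow> nat) set" where
  "frame_class k = {p \<in> Mpos k. card (Bset k p) = 1 \<and>
      (\<forall>i < 3. i \<notin> Bset k p \<longrightarrow> p i = (k - 1) div 2)}"

end

(*
  The permutations of a class A that some combination induces while fixing every oriented face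
  outside A form a monoid, and with a 3-cycle (u v w) it contains its conjugate by any
  combination g, the 3-cycle (g u, g v, g w). So it suffices to realize one 3-cycle (u v w)
  and to find, for every x in A, a combination fixing u and v and sending w to x: the 3-cycles
  (u v x) then generate all even permutations of A.

  After a rigid rotation of the cube every external position has first coordinate 0 or k - 1,
  and the type of its class is determined by where the other two coordinates lie: on the
  boundary, in the middle, or at distance a (resp. b) from the boundary.  Apart from the frame
  this gives six types (corner, midge, wing, x-centre, plus-centre, oblique).  Abstracting
  each coordinate to a symbol that only records whether it is 0, a, b, the middle, some other
  lower value, or the reflection of one of these, moves act on symbol triples independently of
  k, a and b, and so do the orientation faces once every coordinate is tagged with the axis it
  came from.  For each type a commutator realizing a 3-cycle and the conjugating combinations
  are therefore verified once and for all by evaluating their symbolic action on all triples.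
*)

theory Submission
  imports Defs
begin

section \<open>Even permutations are generated by 3-cycles through two points\<close>

lemma cycle3_apply:
  "distinct [x, y, z] \<Longrightarrow>
   cycle_of_list [x, y, z] w = (if w = x then y else if w = y then z else if w = z then x else w)"
  by (auto simp: transpose_def)

context
  fixes R :: "('a \<Rightarrow> 'a) set" and S :: "'a set" and u v :: 'a
  assumes id_in: "id \<in> R"
    and comp_in: "\<And>f g. f \<in> R \<Longrightarrow> g \<in> R \<Longrightarrow> f \<circ> g \<in> R"
    and u: "u \<in> S" and v: "v \<in> S" and uv: "u \<noteq> v"
    and pivot_cycle_in: "\<And>x. x \<in> S \<Longrightarrow> x \<noteq> u \<Longrightarrow> x \<noteq> v \<Longrightarrow> cycle_of_list [u, v, x] \<in> R"
begin

lemma pivot_cycle3_in_closure: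
  assumes "x \<in> S" "y \<in> S" "distinct [u, x, y]"
  shows "cycle_of_list [u, x, y] \<in> R"
proof -
  have sq: "cycle_of_list [u, v, w] \<circ> cycle_of_list [u, v, w] \<in> R" if "w \<in> S" "w \<noteq> u" "w \<noteq> v" for w
    using comp_in pivot_cycle_in that by blast
  consider "x = v" | "y = v" | "v \<notin> {x, y}" by blast
  then show ?thesis
  proof cases
    case 1
    then show ?thesis using assms pivot_cycle_in by auto
  next
    case 2
    then have "cycle_of_list [u, x, y] = cycle_of_list [u, v, x] \<circ> cycle_of_list [u, v, x]"
      using assms by (auto simp del: cycle_of_list.simps simp add: cycle3_apply fun_eq_iff)
    then show ?thesis using sq assms 2 by auto
  next
    case 3
    then have "cycle_of_list [u, x, y] = cycle_of_list [u, v, y] \<circ> (cycle_of_list [u, v, x] \<circ> cycle_of_list [u, v, x])"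
      using assms uv by (auto simp del: cycle_of_list.simps simp add: cycle3_apply fun_eq_iff)
    then show ?thesis using comp_in pivot_cycle_in sq assms 3 by auto
  qed
qed

lemma cycle3_in_closure:
  assumes "x \<in> S" "y \<in> S" "z \<in> S" "distinct [x, y, z]"
  shows "cycle_of_list [x, y, z] \<in> R"
proof -
  have rotate: "cycle_of_list [x, y, z] = cycle_of_list [y, z, x]"
    "cycle_of_list [x, y, z] = cycle_of_list [z, x, y]"
    using assms(4) by (auto simp del: cycle_of_list.simps simp add: cycle3_apply fun_eq_iff)
  consider "u = x" | "u = y" | "u = z" | "u \<notin> {x, y, z}" by blast
  then show ?thesis
  proof cases
    case 1
    have "cycle_of_list [u, y, z] \<in> R" by (rule pivot_cycle3_in_closure) (use assms 1 in auto)
    then show ?thesis using 1 by (simp only:)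
  next
    case 2
    have "cycle_of_list [u, z, x] \<in> R" by (rule pivot_cycle3_in_closure) (use assms 2 in auto)
    then show ?thesis using rotate(1) 2 by (simp only:)
  next
    case 3
    have "cycle_of_list [u, x, y] \<in> R" by (rule pivot_cycle3_in_closure) (use assms 3 in auto)
    then show ?thesis using rotate(2) 3 by (simp only:)
  next
    case 4
    have "cycle_of_list [u, z, x] \<in> R" "cycle_of_list [u, x, y] \<in> R"
      by (rule pivot_cycle3_in_closure; use assms 4 in auto)+
    moreover have "cycle_of_list [x, y, z] = cycle_of_list [u, z, x] \<circ> cycle_of_list [u, x, y]"
      using assms 4 by (auto simp del: cycle_of_list.simps simp add: cycle3_apply fun_eq_iff)
    ultimately show ?thesis using comp_in by (simp only:)
  qed
qed

lemma transpose_pair_in_closure: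
  assumes "a \<in> S" "b \<in> S" "c \<in> S" "d \<in> S" "a \<noteq> b" "c \<noteq> d"
  shows "transpose a b \<circ> transpose c d \<in> R"
proof -
  have adjacent: "transpose x y \<circ> transpose y z \<in> R" if "x \<in> S" "y \<in> S" "z \<in> S" "x \<noteq> y" "y \<noteq> z" for x y z
  proof (cases "x = z")
    case True
    then have "transpose x y \<circ> transpose y z = id" by (simp add: fun_eq_iff transpose_def)
    then show ?thesis using id_in by (simp only:)
  next
    case False
    then show ?thesis using cycle3_in_closure[of x y z] that by simp
  qed
  show ?thesis
  proof (cases "b = c")
    case True
    then show ?thesis using adjacent assms by simp
  next
    case False
    have "transpose a b \<circ> transpose c d = (transpose a b \<circ> transpose b c) \<circ> (transpose b c \<circ> transpose c d)"
      by (simp add: fun_eq_iff)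
    then show ?thesis using adjacent assms False comp_in by simp
  qed
qed

lemma evenperm_in_closure:
  assumes "finite S" "p permutes S" "evenperm p"
  shows "p \<in> R"
proof -
  have "(evenperm p \<longrightarrow> p \<in> R) \<and> (\<not> evenperm p \<longrightarrow> transpose u v \<circ> p \<in> R)"
    using assms(2,1)
  proof (induction rule: permutes_induct)
    case id
    show ?case using id_in evenperm_id unfolding id_def by simp
  next
    case (swap a b q)
    have "permutation q" using \<open>q permutes S\<close> assms(1) permutation_permutes by blast
    then have parity: "evenperm (transpose a b \<circ> q) \<longleftrightarrow> \<not> evenperm q"
      using \<open>a \<noteq> b\<close> by (simp add: evenperm_comp permutation_swap_id evenperm_swap)
    show ?case
    proof (cases "evenperm q")
      case True
      have "transpose u v \<circ> transpose a b \<in> R"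
        using swap.hyps(1-3) u v uv by (intro transpose_pair_in_closure)
      then have "(transpose u v \<circ> transpose a b) \<circ> q \<in> R"
        using swap.IH True comp_in by blast
      then have "transpose u v \<circ> (transpose a b \<circ> q) \<in> R" by (simp only: comp_assoc)
      then show ?thesis using parity True by blast
    next
      case False
      have "transpose a b \<circ> transpose u v \<in> R"
        using swap.hyps(1-3) u v uv by (intro transpose_pair_in_closure)
      then have "(transpose a b \<circ> transpose u v) \<circ> (transpose u v \<circ> q) \<in> R"
        using swap.IH False comp_in by blast
      moreover have "(transpose a b \<circ> transpose u v) \<circ> (transpose u v \<circ> q) = transpose a b \<circ> q"
        by (simp add: fun_eq_iff)
      ultimately have "transpose a b \<circ> q \<in> R" by (simp only:)
      then show ?thesis using parity False by blast
    qed
  qed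
  then show ?thesis using assms(3) by blast
qed

end

section \<open>Moves, combinations and connectivity classes\<close>

lemma rem_other_axis: "i < 3 \<Longrightarrow> j < 3 \<Longrightarrow> i \<noteq> j \<Longrightarrow> rem i j < 3 \<and> rem i j \<noteq> i \<and> rem i j \<noteq> j"
  unfolding rem_def by arith

lemma psi_in_Mpos: "p \<in> Mpos k \<Longrightarrow> i < 3 \<Longrightarrow> j < 3 \<Longrightarrow> psi k i j p \<in> Mpos k"
  by (auto simp: Mpos_def psi_def)

lemma psi_rem: "i < 3 \<Longrightarrow> j < 3 \<Longrightarrow> i \<noteq> j \<Longrightarrow> psi k i j p (rem i j) = p (rem i j)"
  using rem_other_axis[of i j] by (auto simp: psi_def)

lemma psi_fourfold:
  "p \<in> Mpos k \<Longrightarrow> i < 3 \<Longrightarrow> j < 3 \<Longrightarrow> i \<noteq> j \<Longrightarrow> psi k i j (psi k i j (psi k i j (psi k i j p))) = p"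
  unfolding Mpos_def psi_def by (rule ext) auto

lemma move_X_apply:
  "move_X k (i, j, c) (p, l) = (if p (rem i j) = c then (psi k i j p, transpose i j l) else (p, l))"
  by (simp add: move_X_def)

lemma move_pos_apply: "move_pos k (i, j, c) p = (if p (rem i j) = c then psi k i j p else p)"
  by (simp add: move_pos_def)

lemma fst_move_X: "fst (move_X k m x) = move_pos k m (fst x)"
  by (cases m; cases x) (simp add: move_X_apply move_pos_apply)

lemma move_X_fourfold:
  assumes "valid_move k m" "fst x \<in> Mpos k"
  shows "move_X k m (move_X k m (move_X k m (move_X k m x))) = x"
proof -
  obtain i j c p l where m: "m = (i, j, c)" and x: "x = (p, l)" by (metis prod_cases3 surj_pair)
  have ij: "i < 3" "j < 3" "i \<noteq> j" using assms(1) m by (auto simp: valid_move_def)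
  have "p \<in> Mpos k" using assms(2) x by simp
  then show ?thesis
    unfolding m x by (simp add: move_X_apply psi_rem[OF ij] psi_fourfold[OF _ ij])
qed

lemma comb_X_Nil [simp]: "comb_X k [] = id"
  by (simp add: comb_X_def)

lemma comb_X_Cons [simp]: "comb_X k (m # ms) = move_X k m \<circ> comb_X k ms"
  by (simp add: comb_X_def)

lemma comb_X_append: "comb_X k (ms @ ms') = comb_X k ms \<circ> comb_X k ms'"
  by (induction ms) auto

lemma comb_pos_Nil [simp]: "comb_pos k [] = id"
  by (simp add: comb_pos_def)

lemma comb_pos_Cons [simp]: "comb_pos k (m # ms) = move_pos k m \<circ> comb_pos k ms"
  by (simp add: comb_pos_def)

lemma comb_pos_append: "comb_pos k (ms @ ms') = comb_pos k ms \<circ> comb_pos k ms'"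
  by (induction ms) auto

lemma fst_comb_X: "fst (comb_X k ms x) = comb_pos k ms (fst x)"
  by (induction ms) (auto simp: fst_move_X)

lemma combination_Nil [simp]: "combination k []"
  by (simp add: combination_def)

lemma combination_Cons [simp]: "combination k (m # ms) \<longleftrightarrow> valid_move k m \<and> combination k ms"
  by (simp add: combination_def)

lemma combination_append [simp]: "combination k (ms @ ms') \<longleftrightarrow> combination k ms \<and> combination k ms'"
  by (auto simp: combination_def)

lemma comb_pos_in_Mpos: "combination k ms \<Longrightarrow> p \<in> Mpos k \<Longrightarrow> comb_pos k ms p \<in> Mpos k"
  by (induction ms) (auto simp: valid_move_def move_pos_def psi_in_Mpos)

text \<open>A move has order four, so repeating each move of a combination three times, in reverse
  order, inverts it.\<close>

definition comb_inv :: "'a list \<Rightarrow> 'a list" where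
  "comb_inv ms = concat (map (\<lambda>m. [m, m, m]) (rev ms))"

lemma comb_inv_Nil [simp]: "comb_inv [] = []"
  by (simp add: comb_inv_def)

lemma comb_inv_Cons [simp]: "comb_inv (m # ms) = comb_inv ms @ [m, m, m]"
  by (simp add: comb_inv_def)

lemma set_comb_inv [simp]: "set (comb_inv ms) = set ms"
  by (auto simp: comb_inv_def)

lemma combination_comb_inv [simp]: "combination k (comb_inv ms) \<longleftrightarrow> combination k ms"
  by (simp add: combination_def)

lemma comb_X_comb_inv_left:
  "combination k ms \<Longrightarrow> fst x \<in> Mpos k \<Longrightarrow> comb_X k (comb_inv ms) (comb_X k ms x) = x"
proof (induction ms arbitrary: x)
  case (Cons m ms)
  have "fst (comb_X k ms x) \<in> Mpos k"
    using Cons.prems comb_pos_in_Mpos by (simp add: fst_comb_X)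
  then show ?case using Cons by (simp add: comb_X_append move_X_fourfold)
qed simp

lemma comb_X_comb_inv_right:
  "combination k ms \<Longrightarrow> fst x \<in> Mpos k \<Longrightarrow> comb_X k ms (comb_X k (comb_inv ms) x) = x"
proof (induction ms arbitrary: x)
  case (Cons m ms)
  have "fst (comb_X k [m, m, m] x) \<in> Mpos k"
    using Cons.prems comb_pos_in_Mpos[of k "[m, m, m]"] by (simp add: fst_comb_X del: comb_X_Cons)
  then show ?case using Cons by (simp add: comb_X_append move_X_fourfold)
qed simp

lemma comb_pos_comb_inv_left:
  "combination k ms \<Longrightarrow> p \<in> Mpos k \<Longrightarrow> comb_pos k (comb_inv ms) (comb_pos k ms p) = p"
  using arg_cong[OF comb_X_comb_inv_left[of k ms "(p, 0)"], of fst] by (simp only: fst_comb_X fst_conv)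

lemma comb_pos_comb_inv_right:
  "combination k ms \<Longrightarrow> p \<in> Mpos k \<Longrightarrow> comb_pos k ms (comb_pos k (comb_inv ms) p) = p"
  using arg_cong[OF comb_X_comb_inv_right[of k ms "(p, 0)"], of fst] by (simp only: fst_comb_X fst_conv)

definition faces :: "nat \<Rightarrow> ((nat \<Rightarrow> nat) \<times> nat) set" where
  "faces k = {(p, l). external k p \<and> l \<in> Bset k p}"

lemma move_X_in_faces:
  assumes "valid_move k m" "x \<in> faces k"
  shows "move_X k m x \<in> faces k"
proof -
  obtain i j c p l where m: "m = (i, j, c)" and x: "x = (p, l)" by (metis prod_cases3 surj_pair)
  have ij: "i < 3" "j < 3" "i \<noteq> j" using assms(1) m by (auto simp: valid_move_def)
  have p: "p \<in> Mpos k" "l \<in> Bset k p" using assms(2) x by (auto simp: faces_def external_def)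
  have "l \<in> Bset k p \<Longrightarrow> transpose i j l \<in> Bset k (psi k i j p)"
    using p(1) ij by (auto simp: Bset_def psi_def transpose_def Mpos_def)
  then show ?thesis
    using p psi_in_Mpos[OF p(1) ij(1,2)] unfolding m x
    by (auto simp: faces_def external_def move_X_apply)
qed

lemma comb_X_in_faces: "combination k ms \<Longrightarrow> x \<in> faces k \<Longrightarrow> comb_X k ms x \<in> faces k"
  by (induction ms) (auto simp: move_X_in_faces)

lemma conn_class_refl [simp]: "p \<in> conn_class k p"
  unfolding conn_class_def by (auto intro!: exI[of _ "[]"] simp: combination_def)

lemma comb_pos_in_conn_class:
  assumes "q \<in> conn_class k p" "combination k ms"
  shows "comb_pos k ms q \<in> conn_class k p"
proof -
  obtain ms' where "q = comb_pos k ms' p" "combination k ms'"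
    using assms(1) by (auto simp: conn_class_def)
  then have "comb_pos k ms q = comb_pos k (ms @ ms') p" "combination k (ms @ ms')"
    using assms(2) by (auto simp: comb_pos_append)
  then show ?thesis unfolding conn_class_def by blast
qed

lemma conn_class_subset_Mpos: "p \<in> Mpos k \<Longrightarrow> conn_class k p \<subseteq> Mpos k"
  by (auto simp: conn_class_def comb_pos_in_Mpos)

lemma conn_class_sym:
  assumes "p \<in> Mpos k" "q \<in> conn_class k p"
  shows "p \<in> conn_class k q"
proof -
  obtain ms where "q = comb_pos k ms p" "combination k ms"
    using assms(2) by (auto simp: conn_class_def)
  then have "p = comb_pos k (comb_inv ms) q"
    using assms(1) comb_pos_comb_inv_left by simp
  then show ?thesis
    using comb_pos_in_conn_class[OF conn_class_refl] \<open>combination k ms\<close> by simp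
qed

lemma conn_class_eq:
  assumes "p \<in> Mpos k" "q \<in> conn_class k p"
  shows "conn_class k q = conn_class k p"
proof -
  have trans: "conn_class k y \<subseteq> conn_class k x" if "y \<in> conn_class k x" for x y
    using that comb_pos_in_conn_class by (auto simp: conn_class_def[of k y])
  have "q \<in> Mpos k" using assms conn_class_subset_Mpos by blast
  then show ?thesis using trans assms conn_class_sym by blast
qed

lemma comb_pos_external:
  assumes "external k p" "combination k ms"
  shows "external k (comb_pos k ms p)"
proof -
  obtain l where "l \<in> Bset k p" using assms(1) by (auto simp: external_def)
  then have "comb_X k ms (p, l) \<in> faces k" using assms by (intro comb_X_in_faces) (auto simp: faces_def)
  then show ?thesis using fst_comb_X[of k ms "(p, l)"] by (auto simp: faces_def)
qed

lemma conn_class_external: "external k p \<Longrightarrow> q \<in> conn_class k p \<Longrightarrow> external k q"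
  by (auto simp: conn_class_def comb_pos_external)

lemma comb_pos_whole_layers:
  assumes "i < 3" "j < 3" "i \<noteq> j" "distinct cs"
  shows "comb_pos k (map (\<lambda>c. (i, j, c)) cs) q = (if q (rem i j) \<in> set cs then psi k i j q else q)"
  using assms(4)
proof (induction cs)
  case (Cons c cs)
  have "comb_pos k (map (\<lambda>c. (i, j, c)) cs) q (rem i j) = q (rem i j)"
    using Cons psi_rem[OF assms(1-3)] by auto
  then show ?case using Cons by (auto simp: move_pos_apply)
qed simp

lemma psi_in_conn_class:
  assumes "p \<in> Mpos k" "q \<in> conn_class k p" "i < 3" "j < 3" "i \<noteq> j"
  shows "psi k i j q \<in> conn_class k p"
proof -
  have "q \<in> Mpos k" using assms(1,2) conn_class_subset_Mpos by blast
  then have "q (rem i j) < k" using rem_other_axis[OF assms(3-5)] by (simp add: Mpos_def)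
  then have "comb_pos k (map (\<lambda>c. (i, j, c)) [0..<k]) q = psi k i j q"
    using comb_pos_whole_layers[OF assms(3-5)] by simp
  moreover have "combination k (map (\<lambda>c. (i, j, c)) [0..<k])"
    using assms(3-5) by (auto simp: combination_def valid_move_def)
  ultimately show ?thesis using comb_pos_in_conn_class[OF assms(2)] by metis
qed

section \<open>Permutations realized by combinations\<close>

definition realizable :: "nat \<Rightarrow> (nat \<Rightarrow> nat) set \<Rightarrow> ((nat \<Rightarrow> nat) \<Rightarrow> (nat \<Rightarrow> nat)) set" where
  "realizable k A = {\<sigma>. \<exists>ms. combination k ms \<and> (\<forall>p \<in> A. comb_pos k ms p = \<sigma> p) \<and>
     (\<forall>q l. external k q \<and> q \<notin> A \<and> l \<in> Bset k q \<longrightarrow> comb_X k ms (q, l) = (q, l))}"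

lemma id_realizable: "id \<in> realizable k A"
  unfolding realizable_def by (auto intro!: exI[of _ "[]"] simp: combination_def)

lemma comp_realizable:
  assumes "f \<in> realizable k (conn_class k p0)" "g \<in> realizable k (conn_class k p0)"
  shows "f \<circ> g \<in> realizable k (conn_class k p0)"
proof -
  obtain ms where ms: "combination k ms" "\<forall>p \<in> conn_class k p0. comb_pos k ms p = f p"
    "\<forall>q l. external k q \<and> q \<notin> conn_class k p0 \<and> l \<in> Bset k q \<longrightarrow> comb_X k ms (q, l) = (q, l)"
    using assms(1) by (auto simp: realizable_def)
  obtain ms' where ms': "combination k ms'" "\<forall>p \<in> conn_class k p0. comb_pos k ms' p = g p"
    "\<forall>q l. external k q \<and> q \<notin> conn_class k p0 \<and> l \<in> Bset k q \<longrightarrow> comb_X k ms' (q, l) = (q, l)"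
    using assms(2) by (auto simp: realizable_def)
  have "comb_pos k (ms @ ms') p = (f \<circ> g) p" if "p \<in> conn_class k p0" for p
  proof -
    have "comb_pos k ms' p \<in> conn_class k p0" using that ms'(1) by (rule comb_pos_in_conn_class)
    then show ?thesis using that ms(2) ms'(2) by (simp add: comb_pos_append)
  qed
  then show ?thesis
    unfolding realizable_def using ms ms' by (auto intro!: exI[of _ "ms @ ms'"] simp: comb_X_append)
qed

lemma conjugate_realizable:
  assumes p0: "p0 \<in> Mpos k" and \<sigma>: "\<sigma> \<in> realizable k (conn_class k p0)" and g: "combination k g"
    and \<tau>: "\<And>p. p \<in> conn_class k p0 \<Longrightarrow> \<tau> (comb_pos k g p) = comb_pos k g (\<sigma> p)"
  shows "\<tau> \<in> realizable k (conn_class k p0)"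
proof -
  let ?A = "conn_class k p0" and ?G = "comb_pos k g" and ?H = "comb_pos k (comb_inv g)"
  obtain ms where ms: "combination k ms" "\<forall>p \<in> ?A. comb_pos k ms p = \<sigma> p"
    "\<forall>q l. external k q \<and> q \<notin> ?A \<and> l \<in> Bset k q \<longrightarrow> comb_X k ms (q, l) = (q, l)"
    using \<sigma> by (auto simp: realizable_def)
  have A_Mpos: "p \<in> Mpos k" if "p \<in> ?A" for p using that p0 conn_class_subset_Mpos by blast
  have inside: "comb_pos k (g @ ms @ comb_inv g) p = \<tau> p" if "p \<in> ?A" for p
  proof -
    have "?H p \<in> ?A" using that g comb_pos_in_conn_class by simp
    then have "comb_pos k (g @ ms @ comb_inv g) p = \<tau> (?G (?H p))"
      using ms(2) \<tau> by (simp add: comb_pos_append)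
    also have "?G (?H p) = p" using that g A_Mpos comb_pos_comb_inv_right by blast
    finally show ?thesis .
  qed
  have outside: "comb_X k (g @ ms @ comb_inv g) (q, l) = (q, l)"
    if "external k q" "q \<notin> ?A" "l \<in> Bset k q" for q l
  proof -
    obtain q' l' where ql': "comb_X k (comb_inv g) (q, l) = (q', l')" by fastforce
    have "(q', l') \<in> faces k"
      using comb_X_in_faces[of k "comb_inv g" "(q, l)"] that g ql' by (simp add: faces_def)
    moreover have "q' \<notin> ?A"
    proof
      assume "q' \<in> ?A"
      then have "?G q' \<in> ?A" using g by (rule comb_pos_in_conn_class)
      moreover have "q' = ?H q" using fst_comb_X[of k "comb_inv g" "(q, l)"] ql' by simp
      then have "?G q' = q" using that(1) g comb_pos_comb_inv_right by (simp add: external_def)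
      ultimately show False using that(2) by simp
    qed
    ultimately have "comb_X k ms (q', l') = (q', l')" using ms(3) by (simp add: faces_def)
    then have "comb_X k (g @ ms @ comb_inv g) (q, l) = comb_X k g (comb_X k (comb_inv g) (q, l))"
      using ql' by (simp add: comb_X_append)
    also have "\<dots> = (q, l)" using comb_X_comb_inv_right[OF g] that(1) by (simp add: external_def)
    finally show ?thesis .
  qed
  show ?thesis
    unfolding realizable_def using g ms(1) inside outside
    by (auto intro!: exI[of _ "g @ ms @ comb_inv g"])
qed

lemma conjugate_cycle3_realizable:
  assumes p0: "p0 \<in> Mpos k" and g: "combination k g"
    and xyz: "x \<in> conn_class k p0" "y \<in> conn_class k p0" "z \<in> conn_class k p0" "distinct [x, y, z]"
    and "cycle_of_list [x, y, z] \<in> realizable k (conn_class k p0)"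
  shows "cycle_of_list [comb_pos k g x, comb_pos k g y, comb_pos k g z] \<in> realizable k (conn_class k p0)"
proof (rule conjugate_realizable[OF p0 assms(7) g])
  fix p assume p: "p \<in> conn_class k p0"
  have inj: "comb_pos k g w = comb_pos k g w' \<longleftrightarrow> w = w'"
    if "w \<in> conn_class k p0" "w' \<in> conn_class k p0" for w w'
    using that p0 g conn_class_subset_Mpos comb_pos_comb_inv_left by (metis subsetD)
  have "distinct [comb_pos k g x, comb_pos k g y, comb_pos k g z]"
    using xyz by (simp add: inj)
  then show "cycle_of_list [comb_pos k g x, comb_pos k g y, comb_pos k g z] (comb_pos k g p) =
      comb_pos k g (cycle_of_list [x, y, z] p)"
    using xyz p by (simp del: cycle_of_list.simps add: cycle3_apply inj)
qed

section \<open>Symbolic coordinates\<close>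

text \<open>A coordinate is abstracted to \<open>Sz\<close>, \<open>Sa\<close>, \<open>Sb\<close>, \<open>Sm\<close> when it equals \<open>0\<close>, \<open>a\<close>, \<open>b\<close>,
  \<open>(k - 1) / 2\<close>, to \<open>Sw\<close> when it is any other value below the middle, and to the primed
  symbol (with \<open>Sk\<close> for \<open>Sz\<close>) for the reflection \<open>x \<mapsto> k - 1 - x\<close> of these.\<close>

datatype csym = Sz | Sk | Sa | Sa' | Sb | Sb' | Sm | Sw | Sw'

fun csym_flip :: "csym \<Rightarrow> csym" where
  "csym_flip Sz = Sk" | "csym_flip Sk = Sz" | "csym_flip Sa = Sa'" | "csym_flip Sa' = Sa"
| "csym_flip Sb = Sb'" | "csym_flip Sb' = Sb" | "csym_flip Sm = Sm"
| "csym_flip Sw = Sw'" | "csym_flip Sw' = Sw"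

definition lower_csym :: "nat \<Rightarrow> nat \<Rightarrow> nat \<Rightarrow> nat \<Rightarrow> csym" where
  "lower_csym k a b y =
     (if y = 0 then Sz else if y = a then Sa else if y = b then Sb else if 2 * y = k - 1 then Sm else Sw)"

definition csym_of :: "nat \<Rightarrow> nat \<Rightarrow> nat \<Rightarrow> nat \<Rightarrow> csym" where
  "csym_of k a b x =
     (if 2 * x \<le> k - 1 then lower_csym k a b x else csym_flip (lower_csym k a b (k - 1 - x)))"

text \<open>\<open>Sw\<close> and \<open>Sw'\<close> stand for many coordinates and never label a layer (see \<open>compatible\<close>),
  so their coordinate is a dummy.\<close>

fun coord_of :: "nat \<Rightarrow> nat \<Rightarrow> nat \<Rightarrow> csym \<Rightarrow> nat" where
  "coord_of k a b Sz = 0" | "coord_of k a b Sk = k - 1"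
| "coord_of k a b Sa = a" | "coord_of k a b Sa' = k - 1 - a"
| "coord_of k a b Sb = b" | "coord_of k a b Sb' = k - 1 - b"
| "coord_of k a b Sm = (k - 1) div 2"
| "coord_of k a b Sw = 0" | "coord_of k a b Sw' = 0"

definition admissible :: "nat \<Rightarrow> nat \<Rightarrow> nat \<Rightarrow> bool" where
  "admissible k a b \<longleftrightarrow> 2 \<le> k \<and> (a = 0 \<or> 2 * a < k - 1) \<and> (b = 0 \<or> 2 * b < k - 1 \<and> b \<noteq> a)"

definition compatible :: "nat \<Rightarrow> nat \<Rightarrow> nat \<Rightarrow> csym list \<Rightarrow> bool" where
  "compatible k a b L \<longleftrightarrow> admissible k a b \<and>
     (Sa \<in> set L \<longleftrightarrow> a \<noteq> 0) \<and> (Sa' \<in> set L \<longleftrightarrow> a \<noteq> 0) \<and>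
     (Sb \<in> set L \<longleftrightarrow> b \<noteq> 0) \<and> (Sb' \<in> set L \<longleftrightarrow> b \<noteq> 0) \<and>
     (Sm \<in> set L \<longrightarrow> odd k) \<and> Sw \<notin> set L \<and> Sw' \<notin> set L"

definition boundary :: "nat \<Rightarrow> nat \<Rightarrow> bool" where
  "boundary k y \<longleftrightarrow> y = 0 \<or> y = k - 1"

definition middle :: "nat \<Rightarrow> nat \<Rightarrow> bool" where
  "middle k y \<longleftrightarrow> 2 * y = k - 1"

lemma csym_flip_flip [simp]: "csym_flip (csym_flip c) = c"
  by (cases c) simp_all

lemma csym_flip_eq_self_iff: "csym_flip c = c \<longleftrightarrow> c = Sm"
  by (cases c) simp_all

lemma lower_csym_middle:
  assumes "admissible k a b" "2 * y = k - 1"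
  shows "lower_csym k a b y = Sm"
  using assms by (auto simp: lower_csym_def admissible_def)

lemma csym_of_flip:
  assumes "admissible k a b" "x < k"
  shows "csym_of k a b (k - 1 - x) = csym_flip (csym_of k a b x)"
proof -
  consider "2 * x < k - 1" | "2 * x = k - 1" | "2 * x > k - 1" by linarith
  then show ?thesis
  proof cases
    case 1
    then have "\<not> 2 * (k - 1 - x) \<le> k - 1" "k - 1 - (k - 1 - x) = x" using assms(2) by auto
    then show ?thesis using 1 by (simp add: csym_of_def)
  next
    case 2
    then have "k - 1 - x = x" by simp
    then show ?thesis using 2 lower_csym_middle[OF assms(1) 2] by (simp add: csym_of_def)
  next
    case 3
    then have "2 * (k - 1 - x) \<le> k - 1" by simp
    then show ?thesis using 3 by (simp add: csym_of_def)
  qed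
qed

lemma csym_flip_inject [simp]: "csym_flip c = csym_flip d \<longleftrightarrow> c = d"
  by (metis csym_flip_flip)

lemma csym_flip_lower_csym_notin: "csym_flip (lower_csym k a b y) \<notin> {Sz, Sa, Sb, Sw}"
  by (simp add: lower_csym_def)

lemma csym_of_eq_Sz_iff: "csym_of k a b x = Sz \<longleftrightarrow> x = 0"
  using csym_flip_lower_csym_notin[of k a b "k - 1 - x"]
  by (cases "2 * x \<le> k - 1") (auto simp: csym_of_def lower_csym_def)

lemma csym_of_eq_Sa_iff:
  assumes "admissible k a b" "a \<noteq> 0"
  shows "csym_of k a b x = Sa \<longleftrightarrow> x = a"
proof -
  have "2 * a \<le> k - 1" using assms by (simp add: admissible_def)
  then show ?thesis
    using csym_flip_lower_csym_notin[of k a b "k - 1 - x"] assms(2)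
    by (cases "2 * x \<le> k - 1") (auto simp: csym_of_def lower_csym_def)
qed

lemma csym_of_eq_Sb_iff:
  assumes "admissible k a b" "b \<noteq> 0"
  shows "csym_of k a b x = Sb \<longleftrightarrow> x = b"
proof -
  have "2 * b \<le> k - 1" "b \<noteq> a" using assms by (auto simp: admissible_def)
  then show ?thesis
    using csym_flip_lower_csym_notin[of k a b "k - 1 - x"] assms(2)
    by (cases "2 * x \<le> k - 1") (auto simp: csym_of_def lower_csym_def)
qed

lemma csym_of_eq_Sm_iff:
  assumes "admissible k a b" "x < k"
  shows "csym_of k a b x = Sm \<longleftrightarrow> 2 * x = k - 1"
proof (cases "2 * x \<le> k - 1")
  case True
  have "lower_csym k a b x = Sm \<Longrightarrow> 2 * x = k - 1" by (simp add: lower_csym_def split: if_splits)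
  then show ?thesis using True lower_csym_middle[OF assms(1)] by (auto simp: csym_of_def)
next
  case False
  have "csym_flip (lower_csym k a b (k - 1 - x)) = Sm \<longleftrightarrow> lower_csym k a b (k - 1 - x) = Sm"
    using csym_flip_inject[of _ Sm] by simp
  then show ?thesis using False assms(2) by (auto simp: csym_of_def lower_csym_def)
qed

lemma csym_of_top: "admissible k a b \<Longrightarrow> csym_of k a b (k - 1) = Sk"
  by (simp add: csym_of_def lower_csym_def admissible_def)

lemma csym_of_boundary: "admissible k a b \<Longrightarrow> boundary k y \<Longrightarrow> csym_of k a b y \<in> {Sz, Sk}"
  by (metis boundary_def csym_of_eq_Sz_iff csym_of_top insertCI)

lemma csym_of_middle: "admissible k a b \<Longrightarrow> y < k \<Longrightarrow> middle k y \<Longrightarrow> csym_of k a b y = Sm"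
  using csym_of_eq_Sm_iff by (simp add: middle_def)

lemma csym_of_a_pair:
  assumes "admissible k a b" "0 < a" "y = a \<or> y = k - 1 - a"
  shows "csym_of k a b y \<in> {Sa, Sa'}"
proof -
  have "a < k" "csym_of k a b a = Sa" using assms csym_of_eq_Sa_iff by (auto simp: admissible_def)
  then show ?thesis using assms csym_of_flip[OF assms(1)] by auto
qed

lemma csym_of_b_pair:
  assumes "admissible k a b" "0 < b" "y = b \<or> y = k - 1 - b"
  shows "csym_of k a b y \<in> {Sb, Sb'}"
proof -
  have "b < k" "csym_of k a b b = Sb" using assms csym_of_eq_Sb_iff by (auto simp: admissible_def)
  then show ?thesis using assms csym_of_flip[OF assms(1)] by auto
qed

lemma csym_of_eq_coord_of_iff:
  assumes "compatible k a b L" "c \<in> set L" "x < k"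
  shows "csym_of k a b x = c \<longleftrightarrow> x = coord_of k a b c"
proof -
  have adm: "admissible k a b" using assms(1) by (simp add: compatible_def)
  have flipped: "csym_of k a b x = csym_flip d \<longleftrightarrow> csym_of k a b (k - 1 - x) = d" for d
    using csym_of_flip[OF adm assms(3)] by auto
  have "a < k" "b < k" using adm by (auto simp: admissible_def)
  show ?thesis
  proof (cases c)
    case Sz
    then show ?thesis by (simp add: csym_of_eq_Sz_iff)
  next
    case Sk
    then show ?thesis using flipped[of Sz] assms(3) by (auto simp: csym_of_eq_Sz_iff)
  next
    case Sa
    then have "a \<noteq> 0" using assms(1,2) by (simp add: compatible_def)
    then show ?thesis using Sa by (simp add: csym_of_eq_Sa_iff[OF adm])
  next
    case Sa'
    then have "a \<noteq> 0" using assms(1,2) by (simp add: compatible_def)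
    then show ?thesis
      using Sa' flipped[of Sa] assms(3) \<open>a < k\<close> by (auto simp: csym_of_eq_Sa_iff[OF adm])
  next
    case Sb
    then have "b \<noteq> 0" using assms(1,2) by (simp add: compatible_def)
    then show ?thesis using Sb by (simp add: csym_of_eq_Sb_iff[OF adm])
  next
    case Sb'
    then have "b \<noteq> 0" using assms(1,2) by (simp add: compatible_def)
    then show ?thesis
      using Sb' flipped[of Sb] assms(3) \<open>b < k\<close> by (auto simp: csym_of_eq_Sb_iff[OF adm])
  next
    case Sm
    then have "odd k" using assms(1,2) by (simp add: compatible_def)
    then show ?thesis using Sm csym_of_eq_Sm_iff[OF adm assms(3)] by (auto elim!: oddE)
  qed (use assms(1,2) in \<open>simp_all add: compatible_def\<close>)
qed

lemma coord_of_less: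
  assumes "compatible k a b L" "c \<in> set L"
  shows "coord_of k a b c < k"
  using assms by (cases c) (auto simp: compatible_def admissible_def)

lemma csym_of_param_nonzero:
  shows "csym_of k a b x \<in> {Sa, Sa'} \<Longrightarrow> a \<noteq> 0" and "csym_of k a b x \<in> {Sb, Sb'} \<Longrightarrow> b \<noteq> 0"
  by (auto simp: csym_of_def lower_csym_def split: if_splits)

definition occurring_csyms :: "csym list \<Rightarrow> csym list" where
  "occurring_csyms L = remdups (L @ [Sz, Sk, Sm, Sw, Sw'])"

lemma csym_of_in_occurring_csyms:
  assumes "compatible k a b L"
  shows "csym_of k a b x \<in> set (occurring_csyms L)"
  using assms csym_of_param_nonzero[of k a b x]
  by (cases "csym_of k a b x") (auto simp: occurring_csyms_def compatible_def)

fun csym_swap :: "csym \<Rightarrow> csym" where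
  "csym_swap Sa = Sb" | "csym_swap Sb = Sa" | "csym_swap Sa' = Sb'" | "csym_swap Sb' = Sa'"
| "csym_swap c = c"

lemma csym_of_swap: "a \<noteq> b \<Longrightarrow> csym_of k b a x = csym_swap (csym_of k a b x)"
proof -
  assume "a \<noteq> b"
  then have "lower_csym k b a y = csym_swap (lower_csym k a b y)" for y
    by (simp add: lower_csym_def)
  moreover have "csym_swap (csym_flip c) = csym_flip (csym_swap c)" for c
    by (cases c) simp_all
  ultimately show ?thesis by (simp add: csym_of_def)
qed

section \<open>Symbolic simulation of combinations\<close>

definition pos_csyms :: "nat \<Rightarrow> nat \<Rightarrow> nat \<Rightarrow> (nat \<Rightarrow> nat) \<Rightarrow> csym list" where
  "pos_csyms k a b q = [csym_of k a b (q 0), csym_of k a b (q 1), csym_of k a b (q 2)]"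

lemma less_3_cases: "(n::nat) < 3 \<longleftrightarrow> n = 0 \<or> n = 1 \<or> n = 2"
  by auto

lemma all_less_3: "(\<forall>n < 3. P n) \<longleftrightarrow> P 0 \<and> P 1 \<and> P (2::nat)"
  by (auto simp: less_3_cases)

lemma length_pos_csyms [simp]: "length (pos_csyms k a b q) = 3"
  by (simp add: pos_csyms_def)

lemma nth_pos_csyms: "n < 3 \<Longrightarrow> pos_csyms k a b q ! n = csym_of k a b (q n)"
  by (auto simp: pos_csyms_def less_3_cases)

lemma pos_csyms_external:
  assumes "admissible k a b" "external k q"
  shows "Sz \<in> set (pos_csyms k a b q) \<or> Sk \<in> set (pos_csyms k a b q)"
proof -
  obtain n where n: "n < 3" "boundary k (q n)"
    using assms(2) by (auto simp: external_def Bset_def boundary_def)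
  then have "csym_of k a b (q n) \<in> set (pos_csyms k a b q)" by (auto simp: pos_csyms_def less_3_cases)
  then show ?thesis using csym_of_boundary[OF assms(1) n(2)] by auto
qed

definition concrete_pos :: "nat \<Rightarrow> nat \<Rightarrow> nat \<Rightarrow> csym list \<Rightarrow> (nat \<Rightarrow> nat)" where
  "concrete_pos k a b s = (\<lambda>i. if i < 3 then coord_of k a b (s ! i) else 0)"

lemma concrete_pos_in_Mpos:
  "compatible k a b L \<Longrightarrow> length s = 3 \<Longrightarrow> set s \<subseteq> set L \<Longrightarrow> concrete_pos k a b s \<in> Mpos k"
  by (auto simp: Mpos_def concrete_pos_def intro!: coord_of_less)

lemma pos_csyms_concrete_pos:
  assumes "compatible k a b L" "length s = 3" "set s \<subseteq> set L"
  shows "pos_csyms k a b (concrete_pos k a b s) = s"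
proof (rule nth_equalityI)
  fix n assume "n < length (pos_csyms k a b (concrete_pos k a b s))"
  then have "n < 3" "s ! n \<in> set L" using assms(2,3) by auto
  then show "pos_csyms k a b (concrete_pos k a b s) ! n = s ! n"
    using assms(1) coord_of_less csym_of_eq_coord_of_iff
    by (simp add: nth_pos_csyms concrete_pos_def)
qed (simp add: assms(2))

lemma concrete_pos_pos_csyms:
  assumes "compatible k a b L" "q \<in> Mpos k" "set (pos_csyms k a b q) \<subseteq> set L"
  shows "concrete_pos k a b (pos_csyms k a b q) = q"
proof
  fix n
  show "concrete_pos k a b (pos_csyms k a b q) n = q n"
  proof (cases "n < 3")
    case True
    then have "csym_of k a b (q n) \<in> set L" "q n < k"
      using assms(2,3) nth_mem[of n "pos_csyms k a b q"] by (auto simp: nth_pos_csyms Mpos_def)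
    then have "q n = coord_of k a b (csym_of k a b (q n))"
      using csym_of_eq_coord_of_iff[OF assms(1)] by blast
    then show ?thesis using True by (simp add: concrete_pos_def nth_pos_csyms)
  next
    case False
    then show ?thesis using assms(2) by (simp add: concrete_pos_def Mpos_def)
  qed
qed

definition psi_csyms :: "nat \<Rightarrow> nat \<Rightarrow> csym list \<Rightarrow> csym list" where
  "psi_csyms i j s = s[i := csym_flip (s ! j), j := s ! i]"

lemma pos_csyms_psi:
  assumes "admissible k a b" "q \<in> Mpos k" "i < 3" "j < 3" "i \<noteq> j"
  shows "pos_csyms k a b (psi k i j q) = psi_csyms i j (pos_csyms k a b q)"
proof (rule nth_equalityI)
  have "q j < k" using assms(2,4) by (simp add: Mpos_def)
  then show "pos_csyms k a b (psi k i j q) ! n = psi_csyms i j (pos_csyms k a b q) ! n"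
    if "n < length (pos_csyms k a b (psi k i j q))" for n
    using that assms csym_of_flip[OF assms(1)]
    by (auto simp: nth_pos_csyms psi_csyms_def psi_def nth_list_update)
qed (simp add: psi_csyms_def)

lemma pos_csyms_in_closed_set:
  assumes "admissible k a b" "p \<in> Mpos k" "pos_csyms k a b p \<in> S"
    and closed: "\<And>s i j. s \<in> S \<Longrightarrow> i < 3 \<Longrightarrow> j < 3 \<Longrightarrow> i \<noteq> j \<Longrightarrow> psi_csyms i j s \<in> S"
    and "x \<in> conn_class k p"
  shows "pos_csyms k a b x \<in> S"
proof -
  obtain ms where x: "x = comb_pos k ms p" and ms: "combination k ms"
    using assms(5) by (auto simp: conn_class_def)
  from ms have "pos_csyms k a b (comb_pos k ms p) \<in> S"
  proof (induction ms)
    case (Cons m ms)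
    obtain i j c where m: "m = (i, j, c)" by (metis prod_cases3)
    then have ij: "i < 3" "j < 3" "i \<noteq> j" using Cons.prems by (auto simp: valid_move_def)
    have "comb_pos k ms p \<in> Mpos k" using Cons.prems assms(2) comb_pos_in_Mpos by simp
    then show ?case
      using Cons closed[OF _ ij] pos_csyms_psi[OF assms(1) _ ij] by (simp add: m move_pos_apply)
  qed (simp add: assms(3))
  then show ?thesis using x by simp
qed

fun smove :: "nat \<times> nat \<times> csym \<Rightarrow> (nat \<times> csym) list \<Rightarrow> (nat \<times> csym) list" where
  "smove (i, j, c) t =
     (if snd (t ! rem i j) = c then t[i := (fst (t ! j), csym_flip (snd (t ! j))), j := t ! i] else t)"

definition scomb :: "(nat \<times> nat \<times> csym) list \<Rightarrow> (nat \<times> csym) list \<Rightarrow> (nat \<times> csym) list" where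
  "scomb ms t = foldr smove ms t"

lemma scomb_Nil [simp]: "scomb [] t = t"
  by (simp add: scomb_def)

lemma scomb_Cons [simp]: "scomb (m # ms) t = smove m (scomb ms t)"
  by (simp add: scomb_def)

definition scombination :: "csym list \<Rightarrow> (nat \<times> nat \<times> csym) list \<Rightarrow> bool" where
  "scombination L ms \<longleftrightarrow> (\<forall>(i, j, c) \<in> set ms. i < 3 \<and> j < 3 \<and> i \<noteq> j \<and> c \<in> set L)"

definition concrete_moves :: "nat \<Rightarrow> nat \<Rightarrow> nat \<Rightarrow> (nat \<times> nat \<times> csym) list \<Rightarrow> (nat \<times> nat \<times> nat) list" where
  "concrete_moves k a b ms = map (\<lambda>(i, j, c). (i, j, coord_of k a b c)) ms"

lemma concrete_moves_Nil [simp]: "concrete_moves k a b [] = []"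
  by (simp add: concrete_moves_def)

lemma concrete_moves_Cons [simp]:
  "concrete_moves k a b ((i, j, c) # ms) = (i, j, coord_of k a b c) # concrete_moves k a b ms"
  by (simp add: concrete_moves_def)

lemma combination_concrete_moves:
  "compatible k a b L \<Longrightarrow> scombination L ms \<Longrightarrow> combination k (concrete_moves k a b ms)"
  by (auto simp: combination_def scombination_def concrete_moves_def valid_move_def intro: coord_of_less)

text \<open>In \<open>tracks k a b (q, l) (q', l') t\<close> the tagged symbolic state \<open>t\<close> describes \<open>(q', l')\<close>
  relative to \<open>(q, l)\<close>: entry \<open>n\<close> holds the symbol of \<open>q' n\<close> and the axis of \<open>q\<close> whose
  coordinate, possibly reflected, has moved to axis \<open>n\<close>; the face \<open>l\<close> has become \<open>l'\<close>.\<close>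

fun tracks :: "nat \<Rightarrow> nat \<Rightarrow> nat \<Rightarrow> (nat \<Rightarrow> nat) \<times> nat \<Rightarrow> (nat \<Rightarrow> nat) \<times> nat \<Rightarrow> (nat \<times> csym) list \<Rightarrow> bool"
  where
  "tracks k a b (q, l) (q', l') t \<longleftrightarrow> q' \<in> Mpos k \<and> l' < 3 \<and> length t = 3 \<and> fst (t ! l') = l \<and>
     (\<forall>n < 3. fst (t ! n) < 3 \<and> (q' n = q (fst (t ! n)) \<or> q' n = k - 1 - q (fst (t ! n))) \<and>
        snd (t ! n) = csym_of k a b (q' n))"

lemma tracks_psi:
  assumes adm: "admissible k a b" and q: "q \<in> Mpos k" and tr: "tracks k a b (q, l) (q', l') t"
    and ij: "i < 3" "j < 3" "i \<noteq> j"
  shows "tracks k a b (q, l) (psi k i j q', transpose i j l')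
    (t[i := (fst (t ! j), csym_flip (snd (t ! j))), j := t ! i])"
    (is "tracks k a b _ _ ?t'")
proof -
  have len: "length t = 3" and tj: "fst (t ! j) < 3" "snd (t ! j) = csym_of k a b (q' j)"
    and ti: "fst (t ! i) < 3" "snd (t ! i) = csym_of k a b (q' i)"
    and src_j: "q' j = q (fst (t ! j)) \<or> q' j = k - 1 - q (fst (t ! j))"
    and src_i: "q' i = q (fst (t ! i)) \<or> q' i = k - 1 - q (fst (t ! i))"
    using tr ij by auto
  have "q (fst (t ! j)) < k" using q tj(1) by (simp add: Mpos_def)
  then have src_flip: "k - 1 - q' j = q (fst (t ! j)) \<or> k - 1 - q' j = k - 1 - q (fst (t ! j))"
    using src_j by auto
  have "q' j < k" using tr ij by (simp add: Mpos_def)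
  then have sym_flip: "csym_flip (snd (t ! j)) = csym_of k a b (k - 1 - q' j)"
    using tj(2) csym_of_flip[OF adm] by simp
  have entry: "fst (?t' ! n) < 3 \<and>
      (psi k i j q' n = q (fst (?t' ! n)) \<or> psi k i j q' n = k - 1 - q (fst (?t' ! n))) \<and>
      snd (?t' ! n) = csym_of k a b (psi k i j q' n)" if "n < 3" for n
  proof -
    consider "n = i" | "n = j" | "n \<noteq> i" "n \<noteq> j" by blast
    then show ?thesis
    proof cases
      case 1
      then show ?thesis using ij len tj src_flip sym_flip by (simp add: psi_def nth_list_update)
    next
      case 2
      then show ?thesis using ij len ti src_i by (simp add: psi_def nth_list_update)
    next
      case 3
      then show ?thesis using tr that by (simp add: psi_def nth_list_update)
    qed
  qed
  have "fst (?t' ! transpose i j l') = l"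
    using tr ij len by (auto simp: transpose_def nth_list_update)
  moreover have "transpose i j l' < 3" using tr ij by (simp add: transpose_def)
  ultimately show ?thesis
    using entry len tr psi_in_Mpos[of q' k i j] ij by simp
qed

lemma tracks_smove:
  assumes L: "compatible k a b L" and q: "q \<in> Mpos k" and tr: "tracks k a b (q, l) (q', l') t"
    and ij: "i < 3" "j < 3" "i \<noteq> j" and c: "c \<in> set L"
  shows "tracks k a b (q, l) (move_X k (i, j, coord_of k a b c) (q', l')) (smove (i, j, c) t)"
proof -
  have adm: "admissible k a b" using L by (simp add: compatible_def)
  have "q' (rem i j) < k" using tr rem_other_axis[OF ij] by (simp add: Mpos_def)
  then have "q' (rem i j) = coord_of k a b c \<longleftrightarrow> snd (t ! rem i j) = c"
    using tr rem_other_axis[OF ij] csym_of_eq_coord_of_iff[OF L c] by auto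
  then show ?thesis using tracks_psi[OF adm q tr ij] tr by (simp add: move_X_apply)
qed

lemma tracks_scomb:
  assumes L: "compatible k a b L" and q: "q \<in> Mpos k" and l: "l < 3" and ms: "scombination L ms"
  shows "tracks k a b (q, l) (comb_X k (concrete_moves k a b ms) (q, l)) (scomb ms (enumerate 0 (pos_csyms k a b q)))"
  using ms
proof (induction ms)
  case Nil
  show ?case using q l by (simp add: nth_enumerate_eq nth_pos_csyms)
next
  case (Cons m ms)
  obtain i j c where m: "m = (i, j, c)" by (metis prod_cases3)
  have step: "i < 3" "j < 3" "i \<noteq> j" "c \<in> set L" "scombination L ms"
    using Cons.prems by (auto simp: scombination_def m)
  obtain q' l' where ql': "comb_X k (concrete_moves k a b ms) (q, l) = (q', l')" by fastforce
  have "tracks k a b (q, l) (q', l') (scomb ms (enumerate 0 (pos_csyms k a b q)))"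
    using Cons.IH[OF step(5)] by (simp only: ql')
  then have "tracks k a b (q, l) (move_X k (i, j, coord_of k a b c) (q', l'))
      (smove (i, j, c) (scomb ms (enumerate 0 (pos_csyms k a b q))))"
    by (rule tracks_smove[OF L q _ step(1-4)])
  then show ?case by (simp only: m ql' comb_X_Cons concrete_moves_Cons scomb_Cons comp_apply)
qed

lemma csym_of_reflect_eq_imp:
  assumes "admissible k a b" "x < k" "csym_of k a b (k - 1 - x) = csym_of k a b x"
  shows "k - 1 - x = x"
proof -
  have "csym_of k a b x = Sm"
    using assms csym_of_flip csym_flip_eq_self_iff by metis
  then show ?thesis using csym_of_eq_Sm_iff[OF assms(1,2)] by simp
qed

lemma comb_X_fixed_if_scomb_fixed:
  assumes L: "compatible k a b L" and q: "q \<in> Mpos k" and l: "l < 3" and ms: "scombination L ms"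
    and fixed: "scomb ms (enumerate 0 (pos_csyms k a b q)) = enumerate 0 (pos_csyms k a b q)"
  shows "comb_X k (concrete_moves k a b ms) (q, l) = (q, l)"
proof -
  obtain q' l' where ql': "comb_X k (concrete_moves k a b ms) (q, l) = (q', l')" by fastforce
  have tr: "tracks k a b (q, l) (q', l') (enumerate 0 (pos_csyms k a b q))"
    using tracks_scomb[OF L q l ms] by (simp only: ql' fixed)
  then have "l' = l" by (auto simp: nth_enumerate_eq)
  moreover have "q' = q"
  proof
    fix n
    show "q' n = q n"
    proof (cases "n < 3")
      case True
      have adm: "admissible k a b" using L by (simp add: compatible_def)
      have "q' n = q n \<or> q' n = k - 1 - q n" "csym_of k a b (q' n) = csym_of k a b (q n)"
        using tr True by (auto simp: nth_enumerate_eq nth_pos_csyms)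
      moreover have "q n < k" using q True by (simp add: Mpos_def)
      ultimately show ?thesis using csym_of_reflect_eq_imp[OF adm] by auto
    next
      case False
      then show ?thesis using q tr by (simp add: Mpos_def)
    qed
  qed
  ultimately show ?thesis using ql' by simp
qed

lemma comb_pos_if_scomb:
  assumes L: "compatible k a b L" and q: "q \<in> Mpos k" and ms: "scombination L ms"
    and s: "map snd (scomb ms (enumerate 0 (pos_csyms k a b q))) = s" "set s \<subseteq> set L"
  shows "comb_pos k (concrete_moves k a b ms) q = concrete_pos k a b s"
proof
  fix n
  let ?t = "scomb ms (enumerate 0 (pos_csyms k a b q))" and ?q' = "comb_pos k (concrete_moves k a b ms) q"
  have tr: "tracks k a b (q, 0) (?q', snd (comb_X k (concrete_moves k a b ms) (q, 0))) ?t"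
    using tracks_scomb[OF L q _ ms] fst_comb_X[of k "concrete_moves k a b ms" "(q, 0)"]
    by (metis fst_conv prod.collapse zero_less_numeral)
  show "?q' n = concrete_pos k a b s n"
  proof (cases "n < 3")
    case True
    have "length ?t = 3" using tr by simp
    then have "s ! n = snd (?t ! n)" "s ! n \<in> set L" using s True by auto
    moreover have "snd (?t ! n) = csym_of k a b (?q' n)" "?q' n < k"
      using tr True by (auto simp: Mpos_def)
    ultimately have "?q' n = coord_of k a b (s ! n)" using csym_of_eq_coord_of_iff[OF L] by metis
    then show ?thesis using True by (simp add: concrete_pos_def)
  next
    case False
    then show ?thesis using tr by (simp add: Mpos_def concrete_pos_def)
  qed
qed

section \<open>Certificates\<close>

definition scomb_fixes :: "(nat \<times> nat \<times> csym) list \<Rightarrow> csym list \<Rightarrow> bool" where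
  "scomb_fixes w s \<longleftrightarrow> scomb w (enumerate 0 s) = enumerate 0 s"

definition scomb_csyms :: "(nat \<times> nat \<times> csym) list \<Rightarrow> csym list \<Rightarrow> csym list" where
  "scomb_csyms w s = map snd (scomb w (enumerate 0 s))"

record certificate =
  layers :: "csym list"
  cycle :: "(nat \<times> nat \<times> csym) list"
  pivot0 :: "csym list"
  pivot1 :: "csym list"
  pivot2 :: "csym list"
  conjugators :: "(csym list \<times> (nat \<times> nat \<times> csym) list) list"

definition shapes :: "certificate \<Rightarrow> csym list list" where
  "shapes C = pivot0 C # pivot1 C # map fst (conjugators C)"

text \<open>Quantifying over all external triples of \<open>occurring_csyms\<close> makes \<open>cycle C\<close> fix, with their
  orientation faces, all external positions of the cube other than the three pivots.\<close>

definition valid_certificate :: "certificate \<Rightarrow> bool" where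
  "valid_certificate C \<longleftrightarrow>
     scombination (layers C) (cycle C) \<and>
     (\<forall>(s, w) \<in> set (conjugators C). scombination (layers C) w) \<and>
     (\<forall>s \<in> set (shapes C). length s = 3 \<and> set s \<subseteq> set (layers C)) \<and>
     pivot2 C \<in> fst ` set (conjugators C) \<and> distinct [pivot0 C, pivot1 C, pivot2 C] \<and>
     scomb_csyms (cycle C) (pivot0 C) = pivot1 C \<and>
     scomb_csyms (cycle C) (pivot1 C) = pivot2 C \<and>
     scomb_csyms (cycle C) (pivot2 C) = pivot0 C \<and>
     (\<forall>x \<in> set (occurring_csyms (layers C)). \<forall>y \<in> set (occurring_csyms (layers C)).
      \<forall>z \<in> set (occurring_csyms (layers C)). Sz \<in> {x, y, z} \<or> Sk \<in> {x, y, z} \<longrightarrow>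
        [x, y, z] \<in> {pivot0 C, pivot1 C, pivot2 C} \<or> scomb_fixes (cycle C) [x, y, z]) \<and>
     (\<forall>(s, w) \<in> set (conjugators C). scomb_csyms w (pivot0 C) = pivot0 C \<and>
        scomb_csyms w (pivot1 C) = pivot1 C \<and> scomb_csyms w (pivot2 C) = s) \<and>
     (\<forall>s \<in> set (shapes C). \<forall>i < 3. \<forall>j < 3. i \<noteq> j \<longrightarrow> psi_csyms i j s \<in> set (shapes C))"

locale certified_class =
  fixes k a b :: nat and C :: certificate and p :: "nat \<Rightarrow> nat"
  assumes valid: "valid_certificate C"
    and compat: "compatible k a b (layers C)"
    and p_external: "external k p"
    and p_shape: "pos_csyms k a b p \<in> set (shapes C)"
begin

abbreviation pos :: "csym list \<Rightarrow> nat \<Rightarrow> nat" where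
  "pos \<equiv> concrete_pos k a b"

abbreviation moves :: "(nat \<times> nat \<times> csym) list \<Rightarrow> (nat \<times> nat \<times> nat) list" where
  "moves \<equiv> concrete_moves k a b"

lemma admissible_params: "admissible k a b"
  using compat by (simp add: compatible_def)

lemma p_in_Mpos: "p \<in> Mpos k"
  using p_external by (simp add: external_def)

lemma class_in_Mpos: "x \<in> conn_class k p \<Longrightarrow> x \<in> Mpos k"
  using p_in_Mpos conn_class_subset_Mpos by blast

lemma shapes_wf: "s \<in> set (shapes C) \<Longrightarrow> length s = 3 \<and> set s \<subseteq> set (layers C)"
  using valid by (simp add: valid_certificate_def)

lemma pos_in_Mpos: "s \<in> set (shapes C) \<Longrightarrow> pos s \<in> Mpos k"
  using concrete_pos_in_Mpos[OF compat] shapes_wf by blast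

lemma pos_csyms_pos: "s \<in> set (shapes C) \<Longrightarrow> pos_csyms k a b (pos s) = s"
  using pos_csyms_concrete_pos[OF compat] shapes_wf by blast

lemma class_shapes: "x \<in> conn_class k p \<Longrightarrow> pos_csyms k a b x \<in> set (shapes C)"
  using valid pos_csyms_in_closed_set[OF admissible_params p_in_Mpos p_shape]
  by (simp add: valid_certificate_def)

lemma pos_pos_csyms: "x \<in> conn_class k p \<Longrightarrow> pos (pos_csyms k a b x) = x"
  using concrete_pos_pos_csyms[OF compat] class_in_Mpos class_shapes shapes_wf by blast

lemma pivots_in_shapes: "pivot0 C \<in> set (shapes C)" "pivot1 C \<in> set (shapes C)" "pivot2 C \<in> set (shapes C)"
  using valid by (auto simp: valid_certificate_def shapes_def)

lemma comb_pos_moves_pos: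
  assumes "s \<in> set (shapes C)" "s' \<in> set (shapes C)" "scombination (layers C) w" "scomb_csyms w s = s'"
  shows "comb_pos k (moves w) (pos s) = pos s'"
proof -
  have "map snd (scomb w (enumerate 0 (pos_csyms k a b (pos s)))) = s'"
    using assms(4) pos_csyms_pos[OF assms(1)] by (simp add: scomb_csyms_def)
  then show ?thesis
    using comb_pos_if_scomb[OF compat pos_in_Mpos[OF assms(1)] assms(3)] shapes_wf[OF assms(2)]
    by blast
qed

lemma cycle_moves:
  "comb_pos k (moves (cycle C)) (pos (pivot0 C)) = pos (pivot1 C)"
  "comb_pos k (moves (cycle C)) (pos (pivot1 C)) = pos (pivot2 C)"
  "comb_pos k (moves (cycle C)) (pos (pivot2 C)) = pos (pivot0 C)"
  using valid by (auto simp: valid_certificate_def intro!: comb_pos_moves_pos pivots_in_shapes)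

lemma conjugator_moves:
  assumes "(s, w) \<in> set (conjugators C)"
  shows "comb_pos k (moves w) (pos (pivot0 C)) = pos (pivot0 C)"
    and "comb_pos k (moves w) (pos (pivot1 C)) = pos (pivot1 C)"
    and "comb_pos k (moves w) (pos (pivot2 C)) = pos s"
proof -
  have "s \<in> set (shapes C)" using assms by (force simp: shapes_def)
  then show "comb_pos k (moves w) (pos (pivot0 C)) = pos (pivot0 C)"
    and "comb_pos k (moves w) (pos (pivot1 C)) = pos (pivot1 C)"
    and "comb_pos k (moves w) (pos (pivot2 C)) = pos s"
    using assms valid by (auto simp: valid_certificate_def intro!: comb_pos_moves_pos pivots_in_shapes)
qed

lemma combination_moves: "scombination (layers C) w \<Longrightarrow> combination k (moves w)"
  using combination_concrete_moves[OF compat] .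

lemma cycle_combination: "combination k (moves (cycle C))"
  using valid by (simp add: valid_certificate_def combination_moves)

lemma conjugator_combination: "(s, w) \<in> set (conjugators C) \<Longrightarrow> combination k (moves w)"
  using valid by (auto simp: valid_certificate_def intro: combination_moves)

lemma pivots_in_class:
  "pos (pivot0 C) \<in> conn_class k p" "pos (pivot1 C) \<in> conn_class k p" "pos (pivot2 C) \<in> conn_class k p"
proof -
  let ?s = "pos_csyms k a b p" and ?cyc = "comb_pos k (moves (cycle C))"
  have p: "pos ?s = p" using pos_pos_csyms by simp
  have "pos (pivot2 C) \<in> conn_class k p"
  proof -
    consider "?s = pivot0 C" | "?s = pivot1 C" | w where "(?s, w) \<in> set (conjugators C)"
      using p_shape by (auto simp: shapes_def)
    then show ?thesis
    proof cases
      case 1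
      then have "pos (pivot2 C) = ?cyc (?cyc p)" using p cycle_moves by simp
      then show ?thesis using cycle_combination comb_pos_in_conn_class by simp
    next
      case 2
      then have "pos (pivot2 C) = ?cyc p" using p cycle_moves by simp
      then show ?thesis using cycle_combination comb_pos_in_conn_class by simp
    next
      case (3 w)
      then have "pos (pivot2 C) = comb_pos k (comb_inv (moves w)) p"
        using p conjugator_moves(3) conjugator_combination comb_pos_comb_inv_left
          pos_in_Mpos pivots_in_shapes by metis
      then show ?thesis using 3 conjugator_combination comb_pos_in_conn_class by simp
    qed
  qed
  then show "pos (pivot0 C) \<in> conn_class k p" "pos (pivot1 C) \<in> conn_class k p"
    "pos (pivot2 C) \<in> conn_class k p"
    using cycle_moves cycle_combination comb_pos_in_conn_class by metis+
qed

lemma pos_eq_pivot_iff: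
  assumes "x \<in> Mpos k" "s \<in> set (shapes C)"
  shows "x = pos s \<longleftrightarrow> pos_csyms k a b x = s"
  using assms pos_csyms_pos concrete_pos_pos_csyms[OF compat] shapes_wf by metis

lemma distinct_pivots: "distinct [pos (pivot0 C), pos (pivot1 C), pos (pivot2 C)]"
  using valid pos_csyms_pos pivots_in_shapes by (simp add: valid_certificate_def) metis

lemma cycle_fixes:
  assumes "external k q" "pos_csyms k a b q \<notin> {pivot0 C, pivot1 C, pivot2 C}" "l < 3"
  shows "comb_X k (moves (cycle C)) (q, l) = (q, l)"
proof -
  let ?S = "set (occurring_csyms (layers C))"
  obtain x y z where xyz: "pos_csyms k a b q = [x, y, z]" "x \<in> ?S" "y \<in> ?S" "z \<in> ?S"
    using csym_of_in_occurring_csyms[OF compat] by (simp add: pos_csyms_def)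
  have "Sz \<in> {x, y, z} \<or> Sk \<in> {x, y, z}"
    using pos_csyms_external[OF admissible_params assms(1)] xyz(1) by simp
  moreover have "[x, y, z] \<notin> {pivot0 C, pivot1 C, pivot2 C}" using assms(2) xyz(1) by simp
  ultimately have "scomb_fixes (cycle C) [x, y, z]"
    using valid xyz(2-4) unfolding valid_certificate_def by blast
  moreover have "q \<in> Mpos k" using assms(1) by (simp add: external_def)
  ultimately show ?thesis
    using comb_X_fixed_if_scomb_fixed[OF compat _ assms(3)] valid xyz(1)
    by (simp add: valid_certificate_def scomb_fixes_def)
qed

lemma cycle_realizable:
  "cycle_of_list [pos (pivot0 C), pos (pivot1 C), pos (pivot2 C)] \<in> realizable k (conn_class k p)"
proof -
  let ?c = "cycle_of_list [pos (pivot0 C), pos (pivot1 C), pos (pivot2 C)]"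
  have inside: "comb_pos k (moves (cycle C)) x = ?c x" if "x \<in> conn_class k p" for x
  proof (cases "x \<in> {pos (pivot0 C), pos (pivot1 C), pos (pivot2 C)}")
    case True
    then show ?thesis using cycle_moves distinct_pivots
      by (auto simp del: cycle_of_list.simps simp: cycle3_apply)
  next
    case False
    then have "pos_csyms k a b x \<notin> {pivot0 C, pivot1 C, pivot2 C}"
      using pos_pos_csyms[OF that] by auto
    then have "comb_X k (moves (cycle C)) (x, 0) = (x, 0)"
      using that cycle_fixes conn_class_external[OF p_external] by simp
    then have "comb_pos k (moves (cycle C)) x = x"
      using fst_comb_X[of k "moves (cycle C)" "(x, 0)"] by simp
    then show ?thesis using False distinct_pivots
      by (auto simp del: cycle_of_list.simps simp: cycle3_apply)
  qed
  have outside: "comb_X k (moves (cycle C)) (q, l) = (q, l)"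
    if "external k q" "q \<notin> conn_class k p" "l \<in> Bset k q" for q l
  proof (rule cycle_fixes)
    have "q \<in> Mpos k" using that(1) by (simp add: external_def)
    then show "pos_csyms k a b q \<notin> {pivot0 C, pivot1 C, pivot2 C}"
      using that(2) pivots_in_class pos_eq_pivot_iff pivots_in_shapes by blast
  qed (use that in \<open>auto simp: Bset_def\<close>)
  show ?thesis
    unfolding realizable_def using cycle_combination inside outside by blast
qed

lemma pivot_cycle_realizable:
  assumes "x \<in> conn_class k p" "x \<noteq> pos (pivot0 C)" "x \<noteq> pos (pivot1 C)"
  shows "cycle_of_list [pos (pivot0 C), pos (pivot1 C), x] \<in> realizable k (conn_class k p)"
proof -
  have "pos_csyms k a b x \<notin> {pivot0 C, pivot1 C}"
    using assms pos_eq_pivot_iff class_in_Mpos pivots_in_shapes by blast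
  then obtain w where w: "(pos_csyms k a b x, w) \<in> set (conjugators C)"
    using class_shapes[OF assms(1)] by (auto simp: shapes_def)
  have "cycle_of_list [comb_pos k (moves w) (pos (pivot0 C)), comb_pos k (moves w) (pos (pivot1 C)),
      comb_pos k (moves w) (pos (pivot2 C))] \<in> realizable k (conn_class k p)"
    using conjugate_cycle3_realizable[OF p_in_Mpos conjugator_combination[OF w] pivots_in_class
        distinct_pivots cycle_realizable] .
  then show ?thesis using conjugator_moves[OF w] pos_pos_csyms[OF assms(1)] by simp
qed

lemma finite_class: "finite (conn_class k p)"
proof (rule finite_subset)
  show "conn_class k p \<subseteq> pos ` set (shapes C)"
  proof
    fix x assume x: "x \<in> conn_class k p"
    show "x \<in> pos ` set (shapes C)"
      using pos_pos_csyms[OF x, symmetric] class_shapes[OF x] by blast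
  qed
qed simp

theorem evenperm_realizable:
  assumes "\<pi> permutes conn_class k p" "evenperm \<pi>"
  shows "\<pi> \<in> realizable k (conn_class k p)"
proof (rule evenperm_in_closure[where R = "realizable k (conn_class k p)" and S = "conn_class k p"
      and u = "pos (pivot0 C)" and v = "pos (pivot1 C)"])
  show "pos (pivot0 C) \<noteq> pos (pivot1 C)" using distinct_pivots by simp
qed (use id_realizable comp_realizable pivots_in_class pivot_cycle_realizable finite_class assms in auto)

end

section \<open>Certificates for the six types of classes\<close>

text \<open>The words below were found by a computer search; here they are only checked by evaluation.\<close>

definition commutator :: "'a list \<Rightarrow> 'a list \<Rightarrow> 'a list" where
  "commutator g h = g @ h @ comb_inv g @ comb_inv h"

lemma smove_triple:
  "smove (0, 1, c) [x, y, z] = (if snd z = c then [(fst y, csym_flip (snd y)), x, z] else [x, y, z])"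
  "smove (0, 2, c) [x, y, z] = (if snd y = c then [(fst z, csym_flip (snd z)), y, x] else [x, y, z])"
  "smove (1, 0, c) [x, y, z] = (if snd z = c then [y, (fst x, csym_flip (snd x)), z] else [x, y, z])"
  "smove (1, 2, c) [x, y, z] = (if snd x = c then [x, (fst z, csym_flip (snd z)), y] else [x, y, z])"
  "smove (2, 0, c) [x, y, z] = (if snd y = c then [z, y, (fst x, csym_flip (snd x))] else [x, y, z])"
  "smove (2, 1, c) [x, y, z] = (if snd x = c then [x, z, (fst y, csym_flip (snd y))] else [x, y, z])"
  by (simp_all add: rem_def)

text \<open>The simplifier rewrites \<open>1 :: nat\<close> to \<open>Suc 0\<close> before \<open>smove_triple\<close> could match.\<close>

lemmas certificate_eval = valid_certificate_def shapes_def smove_triple[unfolded One_nat_def]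
  occurring_csyms_def commutator_def comb_inv_def scomb_fixes_def scomb_def scomb_csyms_def
  scombination_def psi_csyms_def all_less_3

definition corner :: certificate where
  "corner = \<lparr>layers = [Sz, Sk],
     cycle = commutator [(1, 0, Sz), (0, 2, Sz), (0, 1, Sz)] [(0, 2, Sk)],
     pivot0 = [Sz, Sz, Sz], pivot1 = [Sk, Sk, Sz], pivot2 = [Sz, Sk, Sz],
     conjugators =
       [([Sz, Sk, Sz], []),
        ([Sz, Sk, Sk], [(2, 0, Sk), (1, 2, Sk)]),
        ([Sk, Sz, Sz], [(2, 1, Sk), (0, 2, Sk)]),
        ([Sk, Sk, Sk], [(1, 2, Sk), (1, 0, Sz), (0, 2, Sz)]),
        ([Sz, Sz, Sk], [(2, 0, Sz), (0, 2, Sk), (0, 1, Sz)]),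
        ([Sk, Sz, Sk], [(0, 1, Sk), (2, 0, Sz), (0, 2, Sk), (0, 1, Sz)])]\<rparr>"

lemma valid_corner: "valid_certificate corner"
  unfolding corner_def by (simp del: smove.simps add: certificate_eval)

definition midge :: certificate where
  "midge = \<lparr>layers = [Sz, Sk, Sm],
     cycle = commutator [(1, 0, Sz), (0, 2, Sz), (0, 1, Sz)] [(0, 2, Sm)],
     pivot0 = [Sk, Sm, Sz], pivot1 = [Sz, Sm, Sz], pivot2 = [Sk, Sz, Sm],
     conjugators =
       [([Sk, Sz, Sm], []),
        ([Sz, Sz, Sm], [(1, 0, Sm)]),
        ([Sm, Sz, Sk], [(0, 2, Sz)]),
        ([Sm, Sz, Sz], [(2, 0, Sz)]),
        ([Sk, Sk, Sm], [(0, 1, Sm)]),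
        ([Sz, Sm, Sk], [(1, 0, Sk), (0, 2, Sz)]),
        ([Sk, Sm, Sk], [(0, 1, Sk), (0, 2, Sz)]),
        ([Sz, Sk, Sm], [(0, 1, Sm), (0, 1, Sm)]),
        ([Sm, Sk, Sk], [(0, 2, Sk), (0, 1, Sm)]),
        ([Sm, Sk, Sz], [(2, 0, Sk), (0, 1, Sm)])]\<rparr>"

lemma valid_midge: "valid_certificate midge"
  unfolding midge_def by (simp del: smove.simps add: certificate_eval)

definition wing :: certificate where
  "wing = \<lparr>layers = [Sz, Sk, Sa, Sa'],
     cycle = commutator [(1, 0, Sz), (0, 2, Sz), (0, 1, Sz)] [(0, 2, Sa)],
     pivot0 = [Sk, Sz, Sa'], pivot1 = [Sk, Sa, Sz], pivot2 = [Sz, Sa, Sz],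
     conjugators =
       [([Sz, Sa, Sz], []),
        ([Sz, Sz, Sa'], [(2, 1, Sz)]),
        ([Sz, Sk, Sa], [(1, 2, Sz)]),
        ([Sz, Sz, Sa], [(0, 1, Sa), (1, 2, Sz)]),
        ([Sa, Sk, Sk], [(2, 0, Sk), (1, 2, Sz)]),
        ([Sa', Sk, Sz], [(0, 2, Sk), (1, 2, Sz)]),
        ([Sk, Sk, Sa], [(1, 0, Sa), (1, 2, Sz)]),
        ([Sz, Sa', Sk], [(1, 2, Sz), (1, 2, Sz)]),
        ([Sk, Sa', Sk], [(2, 0, Sa'), (1, 2, Sz), (1, 2, Sz)]),
        ([Sa', Sz, Sz], [(2, 1, Sa'), (0, 2, Sk), (1, 2, Sz)]),
        ([Sz, Sa', Sz], [(1, 2, Sz), (0, 1, Sa), (1, 2, Sz)]),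
        ([Sk, Sz, Sa], [(0, 1, Sa), (0, 1, Sa), (1, 2, Sz)]),
        ([Sz, Sa, Sk], [(2, 1, Sz), (0, 1, Sa), (1, 2, Sz)]),
        ([Sa', Sz, Sk], [(2, 0, Sz), (2, 1, Sz), (0, 2, Sz)]),
        ([Sz, Sk, Sa'], [(1, 0, Sa'), (2, 1, Sz), (0, 1, Sa')]),
        ([Sa, Sz, Sz], [(2, 0, Sa), (1, 0, Sz), (0, 2, Sa)]),
        ([Sk, Sk, Sa'], [(0, 2, Sk), (0, 2, Sk), (1, 2, Sz)]),
        ([Sa', Sk, Sk], [(1, 2, Sa'), (0, 2, Sk), (1, 2, Sz)]),
        ([Sa, Sk, Sz], [(2, 0, Sk), (1, 0, Sa), (1, 2, Sz)]),
        ([Sa, Sz, Sk], [(0, 1, Sk), (1, 2, Sz), (1, 2, Sz)]),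
        ([Sk, Sa, Sk], [(1, 0, Sk), (1, 2, Sa'), (0, 2, Sk), (1, 2, Sz)]),
        ([Sk, Sa', Sz], [(0, 2, Sa'), (1, 2, Sz), (0, 1, Sa), (1, 2, Sz)])]\<rparr>"

lemma valid_wing: "valid_certificate wing"
  unfolding wing_def by (simp del: smove.simps add: certificate_eval)

definition xcenter :: certificate where
  "xcenter = \<lparr>layers = [Sz, Sk, Sa, Sa'],
     cycle = commutator [(1, 0, Sz), (0, 2, Sa), (0, 1, Sz)] [(0, 2, Sa')],
     pivot0 = [Sk, Sa, Sa], pivot1 = [Sk, Sa', Sa], pivot2 = [Sa, Sa', Sz],
     conjugators =
       [([Sa, Sa', Sz], []),
        ([Sa, Sz, Sa], [(2, 1, Sa)]),
        ([Sa, Sa, Sz], [(0, 1, Sz)]),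
        ([Sa, Sk, Sa'], [(1, 2, Sa)]),
        ([Sa', Sa', Sz], [(1, 0, Sz)]),
        ([Sa', Sk, Sa'], [(1, 2, Sa'), (1, 0, Sz)]),
        ([Sa, Sz, Sa'], [(2, 1, Sa), (0, 1, Sz)]),
        ([Sk, Sa', Sa'], [(1, 0, Sa'), (1, 2, Sa)]),
        ([Sa, Sk, Sa], [(1, 2, Sa), (0, 1, Sz)]),
        ([Sa', Sa, Sz], [(0, 1, Sz), (0, 1, Sz)]),
        ([Sa, Sa, Sk], [(1, 2, Sa), (1, 2, Sa)]),
        ([Sa', Sz, Sa], [(2, 1, Sa'), (1, 0, Sz)]),
        ([Sz, Sa, Sa'], [(0, 1, Sa'), (1, 2, Sa)]),
        ([Sz, Sa', Sa'], [(1, 0, Sa'), (2, 1, Sa), (0, 1, Sz)]),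
        ([Sa', Sa, Sk], [(1, 2, Sa'), (1, 2, Sa'), (1, 0, Sz)]),
        ([Sa', Sk, Sa], [(1, 2, Sa'), (0, 1, Sz), (0, 1, Sz)]),
        ([Sz, Sa, Sa], [(1, 2, Sz), (0, 1, Sa'), (1, 2, Sa)]),
        ([Sa, Sa', Sk], [(1, 2, Sa), (1, 2, Sa), (0, 1, Sz)]),
        ([Sa', Sz, Sa'], [(2, 1, Sa'), (0, 1, Sz), (0, 1, Sz)]),
        ([Sk, Sa, Sa'], [(0, 1, Sa'), (2, 1, Sa), (0, 1, Sz)]),
        ([Sz, Sa', Sa], [(2, 1, Sz), (1, 0, Sa'), (2, 1, Sa), (0, 1, Sz)]),
        ([Sa', Sa', Sk], [(1, 2, Sa'), (1, 2, Sa'), (0, 1, Sz), (0, 1, Sz)])]\<rparr>"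

lemma valid_xcenter: "valid_certificate xcenter"
  unfolding xcenter_def by (simp del: smove.simps add: certificate_eval)

definition plus :: certificate where
  "plus = \<lparr>layers = [Sz, Sk, Sa, Sa', Sm],
     cycle = commutator [(1, 0, Sz), (0, 2, Sa), (0, 1, Sz)] [(0, 2, Sm)],
     pivot0 = [Sk, Sm, Sa], pivot1 = [Sa, Sm, Sz], pivot2 = [Sk, Sa, Sm],
     conjugators =
       [([Sk, Sa, Sm], []),
        ([Sa', Sk, Sm], [(0, 1, Sm)]),
        ([Sm, Sa, Sk], [(0, 2, Sa)]),
        ([Sa, Sz, Sm], [(1, 0, Sm)]),
        ([Sm, Sa, Sz], [(2, 0, Sa)]),
        ([Sz, Sa', Sm], [(0, 1, Sm), (0, 1, Sm)]),
        ([Sm, Sz, Sa], [(1, 2, Sm), (0, 2, Sa)]),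
        ([Sm, Sz, Sa'], [(2, 0, Sz), (1, 0, Sm)]),
        ([Sa, Sm, Sk], [(1, 0, Sk), (0, 2, Sa)]),
        ([Sm, Sk, Sa], [(2, 0, Sk), (0, 1, Sm)]),
        ([Sa', Sm, Sz], [(2, 1, Sa'), (0, 1, Sm)]),
        ([Sm, Sk, Sa'], [(0, 2, Sk), (0, 1, Sm)]),
        ([Sa', Sm, Sk], [(1, 2, Sa'), (0, 1, Sm)]),
        ([Sz, Sa, Sm], [(0, 2, Sa), (0, 2, Sa)]),
        ([Sm, Sa', Sz], [(0, 2, Sa'), (0, 1, Sm), (0, 1, Sm)]),
        ([Sz, Sm, Sa], [(2, 1, Sz), (0, 1, Sm), (0, 1, Sm)]),
        ([Sz, Sm, Sa'], [(1, 2, Sz), (0, 1, Sm), (0, 1, Sm)]),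
        ([Sm, Sa', Sk], [(2, 0, Sa'), (0, 1, Sm), (0, 1, Sm)]),
        ([Sa, Sk, Sm], [(0, 2, Sk), (0, 2, Sk), (0, 1, Sm)]),
        ([Sk, Sm, Sa'], [(1, 0, Sa), (2, 1, Sk), (0, 1, Sa)]),
        ([Sa', Sz, Sm], [(1, 2, Sa'), (1, 2, Sa'), (0, 1, Sm)]),
        ([Sk, Sa', Sm], [(1, 0, Sa), (1, 2, Sk), (1, 2, Sk), (0, 1, Sa)])]\<rparr>"

lemma valid_plus: "valid_certificate plus"
  unfolding plus_def by (simp del: smove.simps add: certificate_eval)

definition oblique :: certificate where
  "oblique = \<lparr>layers = [Sz, Sk, Sa, Sa', Sb, Sb'],
     cycle = commutator [(1, 0, Sz), (0, 2, Sa), (0, 1, Sz)] [(0, 2, Sb)],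
     pivot0 = [Sk, Sb, Sa], pivot1 = [Sa, Sb, Sz], pivot2 = [Sk, Sa, Sb'],
     conjugators =
       [([Sk, Sa, Sb'], []),
        ([Sb, Sa, Sk], [(0, 2, Sa)]),
        ([Sa', Sk, Sb'], [(0, 1, Sb')]),
        ([Sa, Sz, Sb'], [(1, 0, Sb')]),
        ([Sb', Sa, Sz], [(2, 0, Sa)]),
        ([Sz, Sa', Sb'], [(0, 1, Sb'), (0, 1, Sb')]),
        ([Sb, Sz, Sa], [(1, 2, Sb), (0, 2, Sa)]),
        ([Sa', Sb', Sz], [(2, 1, Sa'), (0, 1, Sb')]),
        ([Sa, Sb', Sk], [(1, 0, Sk), (0, 2, Sa)]),
        ([Sz, Sa, Sb], [(0, 2, Sa), (0, 2, Sa)]),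
        ([Sa', Sb, Sk], [(1, 2, Sa'), (0, 1, Sb')]),
        ([Sb, Sk, Sa'], [(0, 2, Sk), (0, 1, Sb')]),
        ([Sb', Sz, Sa'], [(2, 0, Sz), (1, 0, Sb')]),
        ([Sb', Sk, Sa], [(2, 0, Sk), (0, 1, Sb')]),
        ([Sa, Sk, Sb], [(0, 2, Sk), (0, 2, Sk), (0, 1, Sb')]),
        ([Sz, Sb, Sa'], [(1, 2, Sz), (0, 1, Sb'), (0, 1, Sb')]),
        ([Sz, Sb', Sa], [(2, 1, Sz), (0, 1, Sb'), (0, 1, Sb')]),
        ([Sb', Sa', Sk], [(2, 0, Sa'), (0, 1, Sb'), (0, 1, Sb')]),
        ([Sa', Sz, Sb], [(1, 2, Sa'), (1, 2, Sa'), (0, 1, Sb')]),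
        ([Sb, Sa', Sz], [(0, 2, Sa'), (0, 1, Sb'), (0, 1, Sb')]),
        ([Sk, Sb', Sa'], [(1, 0, Sa), (2, 1, Sk), (0, 1, Sa)]),
        ([Sk, Sa', Sb], [(1, 0, Sa), (1, 2, Sk), (1, 2, Sk), (0, 1, Sa)])]\<rparr>"

lemma valid_oblique: "valid_certificate oblique"
  unfolding oblique_def by (simp del: smove.simps add: certificate_eval)

section \<open>The frame class\<close>

definition frame_pos :: "nat \<Rightarrow> nat \<Rightarrow> nat \<Rightarrow> nat \<Rightarrow> nat" where
  "frame_pos k n v = (\<lambda>i. if i = n then v else if i < 3 then (k - 1) div 2 else 0)"

lemma frame_class_eq:
  assumes "odd k" "2 \<le> k"
  shows "frame_class k = {frame_pos k n v | n v. n < 3 \<and> boundary k v}"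
proof (intro set_eqI iffI)
  fix p assume "p \<in> frame_class k"
  then have p: "p \<in> Mpos k" "card (Bset k p) = 1" "\<forall>i < 3. i \<notin> Bset k p \<longrightarrow> p i = (k - 1) div 2"
    by (auto simp: frame_class_def)
  then obtain n where n: "Bset k p = {n}" by (auto simp: card_1_singleton_iff)
  then have "n < 3" "boundary k (p n)" by (auto simp: Bset_def boundary_def)
  moreover have "p = frame_pos k n (p n)"
  proof
    fix i
    show "p i = frame_pos k n (p n) i"
      using p(1,3) n by (cases "i < 3") (auto simp: frame_pos_def Mpos_def)
  qed
  ultimately show "p \<in> {frame_pos k n v | n v. n < 3 \<and> boundary k v}" by blast
next
  fix p assume "p \<in> {frame_pos k n v | n v. n < 3 \<and> boundary k v}"
  then obtain n v where p: "p = frame_pos k n v" "n < 3" "boundary k v" by blast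
  have mid: "(k - 1) div 2 \<noteq> 0" "(k - 1) div 2 \<noteq> k - 1" "(k - 1) div 2 < k"
    using assms by (auto elim!: oddE)
  have "Bset k p = {n}" using p(2,3) mid unfolding p(1) by (auto simp: Bset_def frame_pos_def boundary_def)
  moreover have "p \<in> Mpos k" using p mid assms(2) by (auto simp: Mpos_def frame_pos_def boundary_def)
  ultimately show "p \<in> frame_class k" using p(1) by (simp add: frame_class_def frame_pos_def)
qed

lemma frame_pos_in_Mpos: "odd k \<Longrightarrow> n < 3 \<Longrightarrow> boundary k v \<Longrightarrow> frame_pos k n v \<in> Mpos k"
  by (auto simp: Mpos_def frame_pos_def boundary_def elim!: oddE)

lemma psi_frame_pos:
  assumes "odd k" "i < 3" "j < 3" "i \<noteq> j" "n < 3"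
  shows "psi k i j (frame_pos k n v) = frame_pos k (transpose i j n) (if n = j then k - 1 - v else v)"
proof (rule ext)
  fix x
  have "k - 1 - (k - 1) div 2 = (k - 1) div 2" using assms(1) by (auto elim!: oddE)
  then show "psi k i j (frame_pos k n v) x = frame_pos k (transpose i j n) (if n = j then k - 1 - v else v) x"
    using assms(2-5)
    by (cases "n = i"; cases "n = j"; cases "x = i"; cases "x = j")
      (simp_all add: psi_def frame_pos_def transpose_def)
qed

lemma comb_pos_frame_pos:
  assumes "odd k" "combination k ms" "n < 3" "boundary k v"
  shows "\<exists>n' v'. comb_pos k ms (frame_pos k n v) = frame_pos k n' v' \<and> n' < 3 \<and> boundary k v'"
  using assms(2)
proof (induction ms)
  case Nil
  then show ?case using assms(3,4) by auto
next
  case (Cons m ms)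
  obtain i j c where m: "m = (i, j, c)" by (metis prod_cases3)
  then have ij: "i < 3" "j < 3" "i \<noteq> j" using Cons.prems by (auto simp: valid_move_def)
  obtain n' v' where nv: "comb_pos k ms (frame_pos k n v) = frame_pos k n' v'" "n' < 3" "boundary k v'"
    using Cons by auto
  show ?case
  proof (cases "frame_pos k n' v' (rem i j) = c")
    case True
    then have "comb_pos k (m # ms) (frame_pos k n v) =
        frame_pos k (transpose i j n') (if n' = j then k - 1 - v' else v')"
      using nv psi_frame_pos[OF assms(1) ij nv(2)] by (simp add: m move_pos_apply)
    moreover have "transpose i j n' < 3" "boundary k (if n' = j then k - 1 - v' else v')"
      using ij nv(2,3) by (auto simp: transpose_def boundary_def)
    ultimately show ?thesis by blast
  next
    case False
    then show ?thesis using nv by (auto simp: m move_pos_apply)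
  qed
qed

lemma frame_pos_in_conn_class:
  assumes "odd k" "n < 3" "boundary k v"
  shows "frame_pos k n v \<in> conn_class k (frame_pos k 0 0)"
proof -
  let ?e = "frame_pos k 0 0"
  have e: "?e \<in> Mpos k" using assms(1) by (simp add: frame_pos_in_Mpos boundary_def)
  have psi0: "psi k 0 j (frame_pos k 0 w) = frame_pos k j w" if "j = 1 \<or> j = 2" for j w
    using psi_frame_pos[OF assms(1), of 0 j 0 w] that by auto
  have "frame_pos k 0 (k - 1) = psi k 0 1 (psi k 0 1 ?e)"
    using psi0[of 1 0] psi_frame_pos[OF assms(1), of 0 1 1 0] by simp
  then have e0: "frame_pos k 0 w \<in> conn_class k ?e" if "boundary k w" for w
    using that psi_in_conn_class[OF e] by (auto simp: boundary_def)
  have "psi k 0 j (frame_pos k 0 v) \<in> conn_class k ?e" if "j = 1 \<or> j = 2" for j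
    using psi_in_conn_class[OF e e0[OF assms(3)], of 0 j] that by auto
  moreover consider "n = 0" | "n = 1" | "n = 2" using assms(2) by linarith
  ultimately show ?thesis using e0[OF assms(3)] psi0 by cases auto
qed

lemma conn_class_frame_pos:
  assumes "odd k" "2 \<le> k" "n < 3" "boundary k v"
  shows "conn_class k (frame_pos k n v) = frame_class k"
proof -
  let ?e = "frame_pos k 0 0"
  have e: "?e \<in> Mpos k" using assms(1) by (simp add: frame_pos_in_Mpos boundary_def)
  have "conn_class k ?e \<subseteq> frame_class k"
    using comb_pos_frame_pos[OF assms(1), of _ 0 0] frame_class_eq[OF assms(1,2)]
    by (auto simp: conn_class_def boundary_def)
  moreover have "frame_class k \<subseteq> conn_class k ?e"
    using frame_pos_in_conn_class[OF assms(1)] frame_class_eq[OF assms(1,2)] by auto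
  ultimately show ?thesis
    using conn_class_eq[OF e frame_pos_in_conn_class[OF assms(1,3,4)]] by simp
qed

section \<open>Classification of the external classes\<close>

lemma boundary_reflect: "y < k \<Longrightarrow> boundary k (k - 1 - y) \<longleftrightarrow> boundary k y"
  by (auto simp: boundary_def)

lemma middle_reflect: "y < k \<Longrightarrow> middle k (k - 1 - y) \<longleftrightarrow> middle k y"
  by (auto simp: middle_def)

lemma boundary_not_middle: "2 \<le> k \<Longrightarrow> boundary k y \<Longrightarrow> \<not> middle k y"
  by (auto simp: boundary_def middle_def)

lemma normal_representative:
  assumes "2 \<le> k" "external k p"
  obtains q where "q \<in> conn_class k p" "boundary k (q 0)"
    "boundary k (q 2) \<Longrightarrow> boundary k (q 1)" "middle k (q 1) \<Longrightarrow> middle k (q 2)"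
proof -
  have p: "p \<in> Mpos k" using assms(2) by (simp add: external_def)
  obtain n where n: "n < 3" "boundary k (p n)"
    using assms(2) by (auto simp: external_def Bset_def boundary_def)
  define q1 where "q1 = (if n = 0 then p else psi k n 0 p)"
  have q1: "q1 \<in> conn_class k p" "boundary k (q1 0)"
    using n psi_in_conn_class[OF p conn_class_refl, of n 0] by (auto simp: q1_def psi_def)
  have "q1 \<in> Mpos k" using q1(1) p conn_class_subset_Mpos by blast
  then have less: "q1 1 < k" by (simp add: Mpos_def)
  show ?thesis
  proof (cases "boundary k (q1 2) \<and> \<not> boundary k (q1 1) \<or> middle k (q1 1) \<and> \<not> middle k (q1 2)")
    case True
    let ?q = "psi k 2 1 q1"
    have "?q 0 = q1 0" "?q 1 = q1 2" "?q 2 = k - 1 - q1 1" by (simp_all add: psi_def)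
    then show ?thesis
      using that[of ?q] True psi_in_conn_class[OF p q1(1), of 2 1] q1(2)
        boundary_reflect[OF less] middle_reflect[OF less] boundary_not_middle[OF assms(1)] by auto
  next
    case False
    then show ?thesis using that[of q1] q1 by blast
  qed
qed

lemma certified_realizable:
  assumes "valid_certificate C" "compatible k a b (layers C)" "q \<in> Mpos k" "boundary k (q 0)"
    "pos_csyms k a b q \<in> set (shapes C)" "\<pi> permutes conn_class k q" "evenperm \<pi>"
  shows "\<pi> \<in> realizable k (conn_class k q)"
proof -
  have "0 \<in> Bset k q" using assms(4) by (simp add: Bset_def boundary_def)
  then have "external k q" using assms(3) by (auto simp: external_def)
  then interpret certified_class k a b C q using assms(1,2,5) by unfold_locales
  show ?thesis using evenperm_realizable assms(6,7) .
qed

lemma coord_cases: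
  assumes "y < k"
  obtains "boundary k y" | "middle k y" | a where "0 < a" "2 * a < k - 1" "y = a \<or> y = k - 1 - a"
proof (cases "boundary k y \<or> middle k y")
  case False
  then show ?thesis
    using assms by (intro that(3)[of "min y (k - 1 - y)"]) (auto simp: boundary_def middle_def min_def)
qed (use that in blast)

lemma corner_midge_wing_realizable:
  assumes k: "2 \<le> k" and q: "q \<in> Mpos k" "boundary k (q 0)" "boundary k (q 1)"
    and \<pi>: "\<pi> permutes conn_class k q" "evenperm \<pi>"
  shows "\<pi> \<in> realizable k (conn_class k q)"
proof -
  have edge: "csym_of k a b (q 0) \<in> {Sz, Sk}" "csym_of k a b (q 1) \<in> {Sz, Sk}" if "admissible k a b" for a b
    using that q(2,3) csym_of_boundary by blast+
  have adm: "admissible k 0 0" using k by (simp add: admissible_def)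
  have "q 2 < k" using q(1) by (simp add: Mpos_def)
  then consider "boundary k (q 2)" | "middle k (q 2)" | a where "0 < a" "2 * a < k - 1" "q 2 = a \<or> q 2 = k - 1 - a"
    by (rule coord_cases)
  then show ?thesis
  proof cases
    case 1
    have "pos_csyms k 0 0 q \<in> set (shapes corner)"
      using edge[OF adm] csym_of_boundary[OF adm 1]
      unfolding pos_csyms_def by (elim insertE emptyE) (simp_all add: corner_def shapes_def)
    then show ?thesis
      using adm by (intro certified_realizable[OF valid_corner _ q(1,2) _ \<pi>]) (auto simp: compatible_def corner_def)
  next
    case 2
    have "pos_csyms k 0 0 q \<in> set (shapes midge)"
      using edge[OF adm] csym_of_middle[OF adm \<open>q 2 < k\<close> 2]
      unfolding pos_csyms_def by (elim insertE emptyE) (simp_all add: midge_def shapes_def)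
    moreover have "odd k" using 2 k by (simp add: middle_def) presburger
    ultimately show ?thesis
      using adm by (intro certified_realizable[OF valid_midge _ q(1,2) _ \<pi>]) (auto simp: compatible_def midge_def)
  next
    case (3 a)
    then have adm_a: "admissible k a 0" using k by (simp add: admissible_def)
    have "pos_csyms k a 0 q \<in> set (shapes wing)"
      using edge[OF adm_a] csym_of_a_pair[OF adm_a 3(1,3)]
      unfolding pos_csyms_def by (elim insertE emptyE) (simp_all add: wing_def shapes_def)
    then show ?thesis
      using adm_a 3(1) by (intro certified_realizable[OF valid_wing _ q(1,2) _ \<pi>]) (auto simp: compatible_def wing_def)
  qed
qed

text \<open>Oblique pieces form two mirror-image classes, exchanged by swapping the roles of \<open>a\<close>
  and \<open>b\<close>.\<close>

lemma oblique_realizable: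
  assumes k: "2 \<le> k" and q: "q \<in> Mpos k" "boundary k (q 0)"
    and a: "0 < a" "2 * a < k - 1" "q 1 = a \<or> q 1 = k - 1 - a"
    and b: "0 < b" "2 * b < k - 1" "q 2 = b \<or> q 2 = k - 1 - b" "a \<noteq> b"
    and \<pi>: "\<pi> permutes conn_class k q" "evenperm \<pi>"
  shows "\<pi> \<in> realizable k (conn_class k q)"
proof -
  have adm: "admissible k a b" using k a b by (auto simp: admissible_def)
  define x y z where "x = csym_of k a b (q 0)" and "y = csym_of k a b (q 1)" and "z = csym_of k a b (q 2)"
  have "x \<in> {Sz, Sk}" "y \<in> {Sa, Sa'}" "z \<in> {Sb, Sb'}"
    using csym_of_boundary[OF adm q(2)] csym_of_a_pair[OF adm a(1,3)] csym_of_b_pair[OF adm b(1,3)]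
    by (simp_all add: x_def y_def z_def)
  then have "[x, y, z] \<in> set (shapes oblique) \<or> [x, csym_swap y, csym_swap z] \<in> set (shapes oblique)"
    by (elim insertE emptyE) (simp_all add: oblique_def shapes_def)
  moreover have "pos_csyms k a b q = [x, y, z]" by (simp add: pos_csyms_def x_def y_def z_def)
  moreover have "pos_csyms k b a q = [x, csym_swap y, csym_swap z]"
    using \<open>x \<in> {Sz, Sk}\<close> b(4) csym_of_swap[of a b k] by (auto simp: pos_csyms_def x_def y_def z_def)
  ultimately consider "pos_csyms k a b q \<in> set (shapes oblique)" | "pos_csyms k b a q \<in> set (shapes oblique)"
    by auto
  then show ?thesis
  proof cases
    case 1
    then show ?thesis using k a b
      by (intro certified_realizable[OF valid_oblique _ q(1,2) _ \<pi>]) (auto simp: compatible_def oblique_def admissible_def)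
  next
    case 2
    then show ?thesis using k a b
      by (intro certified_realizable[OF valid_oblique _ q(1,2) _ \<pi>]) (auto simp: compatible_def oblique_def admissible_def)
  qed
qed

lemma plus_xcenter_oblique_realizable:
  assumes k: "2 \<le> k" and q: "q \<in> Mpos k" "boundary k (q 0)" "\<not> boundary k (q 2)"
    and a: "0 < a" "2 * a < k - 1" "q 1 = a \<or> q 1 = k - 1 - a"
    and \<pi>: "\<pi> permutes conn_class k q" "evenperm \<pi>"
  shows "\<pi> \<in> realizable k (conn_class k q)"
proof -
  have adm_a: "admissible k a 0" using k a by (simp add: admissible_def)
  have "q 2 < k" using q(1) by (simp add: Mpos_def)
  then consider "middle k (q 2)" | b where "0 < b" "2 * b < k - 1" "q 2 = b \<or> q 2 = k - 1 - b"
    by (rule coord_cases) (use q(3) in blast)+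
  then show ?thesis
  proof cases
    case 1
    have "pos_csyms k a 0 q \<in> set (shapes plus)"
      using csym_of_boundary[OF adm_a q(2)] csym_of_a_pair[OF adm_a a(1,3)]
        csym_of_middle[OF adm_a \<open>q 2 < k\<close> 1]
      unfolding pos_csyms_def by (elim insertE emptyE) (simp_all add: plus_def shapes_def)
    moreover have "odd k" using 1 k by (simp add: middle_def) presburger
    ultimately show ?thesis
      using adm_a a(1) by (intro certified_realizable[OF valid_plus _ q(1,2) _ \<pi>]) (auto simp: compatible_def plus_def)
  next
    case (2 b)
    show ?thesis
    proof (cases "b = a")
      case True
      have "csym_of k a 0 (q 1) \<in> {Sa, Sa'}" "csym_of k a 0 (q 2) \<in> {Sa, Sa'}"
        using csym_of_a_pair[OF adm_a] a(1,3) 2(3) True by blast+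
      then have "pos_csyms k a 0 q \<in> set (shapes xcenter)"
        using csym_of_boundary[OF adm_a q(2)]
        unfolding pos_csyms_def by (elim insertE emptyE) (simp_all add: xcenter_def shapes_def)
      then show ?thesis
        using adm_a a(1)
        by (intro certified_realizable[OF valid_xcenter _ q(1,2) _ \<pi>]) (auto simp: compatible_def xcenter_def)
    next
      case False
      then show ?thesis using oblique_realizable[OF k q(1,2) a 2 _ \<pi>] by simp
    qed
  qed
qed

lemma normal_class_realizable:
  assumes k: "2 \<le> k" and q: "q \<in> Mpos k" "boundary k (q 0)"
    and sorted: "boundary k (q 2) \<Longrightarrow> boundary k (q 1)" "middle k (q 1) \<Longrightarrow> middle k (q 2)"
    and not_frame: "odd k \<longrightarrow> conn_class k q \<noteq> frame_class k"
    and \<pi>: "\<pi> permutes conn_class k q" "evenperm \<pi>"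
  shows "\<pi> \<in> realizable k (conn_class k q)"
proof -
  have "q 1 < k" using q(1) by (simp add: Mpos_def)
  then consider "boundary k (q 1)" | "middle k (q 1)"
    | a where "0 < a" "2 * a < k - 1" "q 1 = a \<or> q 1 = k - 1 - a"
    by (rule coord_cases)
  then show ?thesis
  proof cases
    case 1
    then show ?thesis using corner_midge_wing_realizable k q \<pi> by blast
  next
    case 2
    have "odd k" using 2 k by (simp add: middle_def) presburger
    have "q 1 = (k - 1) div 2" "q 2 = (k - 1) div 2" using 2 sorted(2) by (auto simp: middle_def)
    then have "q = frame_pos k 0 (q 0)"
      using q(1) by (auto simp: fun_eq_iff frame_pos_def Mpos_def less_3_cases)
    then have "conn_class k q = frame_class k"
      using conn_class_frame_pos[OF \<open>odd k\<close> k, of 0 "q 0"] q(2) by simp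
    then show ?thesis using not_frame \<open>odd k\<close> by simp
  next
    case (3 a)
    then have "\<not> boundary k (q 1)" by (auto simp: boundary_def)
    then have "\<not> boundary k (q 2)" using sorted(1) by blast
    then show ?thesis using plus_xcenter_oblique_realizable k q 3 \<pi> by blast
  qed
qed

theorem mainTheorem5:
  fixes k :: nat and A :: "(nat \<Rightarrow> nat) set" and \<pi> :: "(nat \<Rightarrow> nat) \<Rightarrow> (nat \<Rightarrow> nat)"
  assumes "k \<ge> 2"
    and "is_conn_class k A"
    and "odd k \<longrightarrow> A \<noteq> frame_class k"
    and "\<pi> permutes A"
    and "evenperm \<pi>"
  shows "\<exists>ms. combination k ms \<and>
           (\<forall>p \<in> A. comb_pos k ms p = \<pi> p) \<and>
           (\<forall>q l. external k q \<and> q \<notin> A \<and> l \<in> Bset k q \<longrightarrow> comb_X k ms (q, l) = (q, l))"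
proof -
  obtain p where p: "external k p" "A = conn_class k p"
    using assms(2) by (auto simp: is_conn_class_def)
  obtain q where q: "q \<in> conn_class k p" "boundary k (q 0)"
    "boundary k (q 2) \<Longrightarrow> boundary k (q 1)" "middle k (q 1) \<Longrightarrow> middle k (q 2)"
    using normal_representative[OF assms(1) p(1)] by blast
  have "p \<in> Mpos k" using p(1) by (simp add: external_def)
  then have "conn_class k q = A" "q \<in> Mpos k"
    using conn_class_eq conn_class_subset_Mpos q(1) p(2) by blast+
  then have "\<pi> \<in> realizable k A"
    using normal_class_realizable[OF assms(1) _ q(2-4)] assms(3-5) by auto
  then show ?thesis unfolding realizable_def by blast
qed

end
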